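(* Let $1\le q\le p<\infty$, let $X$ be a compact manifold with a finite positive Borel measure $\mu$, let $r>0$, and fix $f\in\mathbb S^+_{L^{p/q}}(\mu,r)$. Then there exists $C=C(\mu,p,q,f,r)>0$ such that for all $f_0,f_1\in\mathbb S^+_{L^{p/q}}(\mu,r)$, $$\frac{C}{d^{\mathbb S^+}_{p,q}(f,f_0)+d^{\mathbb S^+}_{p,q}(f,f_1)+1}\,d^{\mathbb S^+}_{p,q}(f_0,f_1)\le\Big(\frac1{\mu(X)}\int_X|f_0-f_1|^p\mu\Big)^{1/p}\le d^{\mathbb S^+}_{p,q}(f_0,f_1).$$
   Context: On $C^\infty(X)$ consider the trivial $L^p$-Finsler metric $\|\psi\|_{p,f}=\big(\frac1{\mu(X)}\int_X|\psi|^p\mu\big)^{1/p}$ for $\psi\in T_fC^\infty(X)\simeq C^\infty(X)$. The positive octant of the $L^{p/q}$-sphere of radius $r$ is $\mathbb S^+_{L^{p/q}}(\mu,r)=\{f\in C^\infty(X):f>0,\ \frac1{\mu(X)}\int_X f^{p/q}\mu=r^{p/q}\}$, a smooth submanifold of $C^\infty(X)$; $d^{\mathbb S^+}_{p,q}$ denotes the path-length distance on it obtained by pulling back $\|\cdot\|_{p,\cdot}$, i.e. the infimum of $\int_0^1\|\dot\gamma_t\|_{p,\gamma_t}dt$ over piecewise smooth curves $\gamma$ in $\mathbb S^+_{L^{p/q}}(\mu,r)$ joining the two points. *)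

theory Defs
  imports "HOL-Analysis.Analysis"
begin

fun Ck_on :: "nat \<Rightarrow> 'n::euclidean_space set \<Rightarrow> ('n \<Rightarrow> real) \<Rightarrow> bool" where
  "Ck_on 0 S g = continuous_on S g"
| "Ck_on (Suc k) S g =
     ((\<forall>x\<in>S. g differentiable (at x)) \<and>
      (\<forall>i\<in>Basis. Ck_on k S (\<lambda>x. frechet_derivative g (at x) i)))"

definition smooth_on_open :: "'n::euclidean_space set \<Rightarrow> ('n \<Rightarrow> real) \<Rightarrow> bool" where
  "smooth_on_open S g \<longleftrightarrow> open S \<and> (\<forall>k. Ck_on k S g)"

definition smooth_atlas :: "'a::t2_space set \<Rightarrow> ('a set \<times> ('a \<Rightarrow> 'n::euclidean_space)) set \<Rightarrow> bool" where
  "smooth_atlas X A \<longleftrightarrow>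
     (\<forall>(U,\<phi>)\<in>A. openin (top_of_set X) U \<and> open (\<phi> ` U) \<and>
                 (\<exists>\<psi>. homeomorphism U (\<phi> ` U) \<phi> \<psi>)) \<and>
     X = (\<Union>(U,\<phi>)\<in>A. U) \<and>
     (\<forall>(U,\<phi>)\<in>A. \<forall>(V,\<psi>)\<in>A. \<forall>i\<in>Basis.
        smooth_on_open (\<phi> ` (U \<inter> V)) (\<lambda>y. \<psi> (inv_into U \<phi> y) \<bullet> i))"

definition compact_smooth_manifold :: "'a::t2_space set \<Rightarrow> ('a set \<times> ('a \<Rightarrow> 'n::euclidean_space)) set \<Rightarrow> bool" where
  "compact_smooth_manifold X A \<longleftrightarrow> compact X \<and> smooth_atlas X A"

text \<open>C^\<infinity>(X): smooth real functions on X (extended by 0 outside X, so that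
elements of C^\<infinity>(X) are determined by their values on X).\<close>

definition Cinf :: "'a set \<Rightarrow> ('a set \<times> ('a \<Rightarrow> 'n::euclidean_space)) set \<Rightarrow> ('a \<Rightarrow> real) set" where
  "Cinf X A = {f. (\<forall>x. x \<notin> X \<longrightarrow> f x = 0) \<and>
                  (\<forall>(U,\<phi>)\<in>A. smooth_on_open (\<phi> ` U) (\<lambda>y. f (inv_into U \<phi> y)))}"

definition smooth_curve_on :: "'a set \<Rightarrow> ('a set \<times> ('a \<Rightarrow> 'n::euclidean_space)) set \<Rightarrow> real \<Rightarrow> real
    \<Rightarrow> (real \<Rightarrow> 'a \<Rightarrow> real) \<Rightarrow> bool" where
  "smooth_curve_on X A a b \<gamma> \<longleftrightarrow>
     (\<forall>(U,\<phi>)\<in>A. \<exists>T g. open T \<and> {a..b} \<subseteq> T \<and> smooth_on_open (T \<times> \<phi> ` U) g \<and>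
        (\<forall>t\<in>{a..b}. \<forall>y\<in>\<phi> ` U. g (t, y) = \<gamma> t (inv_into U \<phi> y)))"

definition piecewise_smooth_curve :: "'a set \<Rightarrow> ('a set \<times> ('a \<Rightarrow> 'n::euclidean_space)) set
    \<Rightarrow> (real \<Rightarrow> 'a \<Rightarrow> real) \<Rightarrow> bool" where
  "piecewise_smooth_curve X A \<gamma> \<longleftrightarrow>
     (\<exists>D. finite D \<and> {0,1} \<subseteq> D \<and> D \<subseteq> {0..1} \<and>
        (\<forall>a\<in>D. \<forall>b\<in>D. a < b \<and> {a<..<b} \<inter> D = {} \<longrightarrow> smooth_curve_on X A a b \<gamma>))"

definition Lp_norm :: "'a measure \<Rightarrow> real \<Rightarrow> ('a \<Rightarrow> real) \<Rightarrow> real" where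
  "Lp_norm M p \<psi> =
     ((1 / measure M (space M)) * (\<integral>x. \<bar>\<psi> x\<bar> powr p \<partial>M)) powr (1 / p)"

definition sphere_plus :: "'a set \<Rightarrow> ('a set \<times> ('a \<Rightarrow> 'n::euclidean_space)) set \<Rightarrow> 'a measure
    \<Rightarrow> real \<Rightarrow> real \<Rightarrow> real \<Rightarrow> ('a \<Rightarrow> real) set" where
  "sphere_plus X A M p q r =
     {f \<in> Cinf X A. (\<forall>x\<in>X. f x > 0) \<and>
        (1 / measure M (space M)) * (\<integral>x. f x powr (p / q) \<partial>M) = r powr (p / q)}"

text \<open>Velocity of a curve at time t: the t-derivative, pointwise on X (irrelevant at the
finitely many break points, which are a null set for the integral in t).\<close>

definition curve_velocity :: "(real \<Rightarrow> 'a \<Rightarrow> real) \<Rightarrow> real \<Rightarrow> 'a \<Rightarrow> real" where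
  "curve_velocity \<gamma> t x = vector_derivative (\<lambda>s. \<gamma> s x) (at t)"

definition curve_length :: "'a measure \<Rightarrow> real \<Rightarrow> (real \<Rightarrow> 'a \<Rightarrow> real) \<Rightarrow> real" where
  "curve_length M p \<gamma> = integral {0..1} (\<lambda>t. Lp_norm M p (curve_velocity \<gamma> t))"

definition dist_sphere :: "'a set \<Rightarrow> ('a set \<times> ('a \<Rightarrow> 'n::euclidean_space)) set \<Rightarrow> 'a measure
    \<Rightarrow> real \<Rightarrow> real \<Rightarrow> real \<Rightarrow> ('a \<Rightarrow> real) \<Rightarrow> ('a \<Rightarrow> real) \<Rightarrow> real" where
  "dist_sphere X A M p q r f0 f1 =
     Inf {curve_length M p \<gamma> | \<gamma>.
            piecewise_smooth_curve X A \<gamma> \<and>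
            (\<forall>t\<in>{0..1}. \<gamma> t \<in> sphere_plus X A M p q r) \<and>
            \<gamma> 0 = f0 \<and> \<gamma> 1 = f1}"

end

theory Submission
  imports Defs
begin

text \<open>The sphere distance is bi-Lipschitz equivalent to the \<open>L\<^sup>p\<close> distance, so the constant
does not even need the denominator.  From below: the \<open>L\<^sup>p\<close> norm of the increment of a curve
is at most its length (a one-sided Dini argument on \<open>\<parallel>\<gamma> t - \<gamma> a\<parallel> - \<integral>\<^sub>a\<^sup>t \<parallel>\<gamma>'\<parallel>\<close>, using
Minkowski's inequality).  From above: with \<open>\<sigma> = p / q\<close>, the curve
\<open>t \<mapsto> ((1 - t) f\<^sub>0\<^sup>\<sigma> + t f\<^sub>1\<^sup>\<sigma>)\<^bsup>1/\<sigma>\<^esup>\<close> stays on the sphere, and its velocity is bounded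
pointwise by \<open>(t\<^bsup>1/\<sigma>-1\<^esup> + (1 - t)\<^bsup>1/\<sigma>-1\<^esup>) \<bar>f\<^sub>1 - f\<^sub>0\<bar>\<close>, whose integral over \<open>[0,1]\<close> is
\<open>2\<sigma> \<bar>f\<^sub>1 - f\<^sub>0\<bar>\<close>.  Hence \<open>C = 1 / (2\<sigma>)\<close> works.\<close>

section \<open>Calculus of \<open>C\<^sup>k\<close> functions\<close>

lemma Ck_on_cong:
  assumes "open S" "\<And>x. x \<in> S \<Longrightarrow> g x = h x" "Ck_on k S g"
  shows "Ck_on k S h"
  using assms
proof (induction k arbitrary: g h)
  case 0
  then show ?case using continuous_on_cong by auto
next
  case (Suc k)
  have "h differentiable (at x)" if x: "x \<in> S" for x
  proof -
    have "g differentiable (at x)" using Suc.prems x by auto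
    then obtain g' where "(g has_derivative g') (at x)" unfolding differentiable_def by blast
    from has_derivative_transform_within_open[OF this Suc.prems(1) x] Suc.prems(2)
    show ?thesis unfolding differentiable_def by blast
  qed
  moreover have "Ck_on k S (\<lambda>x. frechet_derivative h (at x) i)" if i: "i \<in> Basis" for i
  proof (rule Suc.IH[of "\<lambda>x. frechet_derivative g (at x) i"])
    show "Ck_on k S (\<lambda>x. frechet_derivative g (at x) i)" using Suc.prems i by auto
    fix x assume x: "x \<in> S"
    have "g differentiable (at x)" using Suc.prems x by auto
    then show "frechet_derivative g (at x) i = frechet_derivative h (at x) i"
      using frechet_derivative_transform_within_open[OF _ Suc.prems(1) x, of g h] Suc.prems(2) by simp
  qed (fact Suc.prems(1))
  ultimately show ?case by simp
qed

lemma Ck_on_Suc_imp_Ck_on: "Ck_on (Suc k) S g \<Longrightarrow> Ck_on k S g"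
proof (induction k arbitrary: g)
  case 0
  then show ?case
    by (auto intro!: continuous_at_imp_continuous_on differentiable_imp_continuous_within)
qed auto

lemma Ck_on_const: "Ck_on k S (\<lambda>x. c)"
  by (induction k arbitrary: c) simp_all

lemma Ck_on_add:
  assumes "open S" "Ck_on k S g" "Ck_on k S h"
  shows "Ck_on k S (\<lambda>x. g x + h x)"
  using assms(2,3)
proof (induction k arbitrary: g h)
  case 0 then show ?case by (auto intro: continuous_on_add)
next
  case (Suc k)
  have "Ck_on k S (\<lambda>x. frechet_derivative (\<lambda>x. g x + h x) (at x) i)" if i: "i \<in> Basis" for i
  proof (rule Ck_on_cong[OF \<open>open S\<close>])
    show "Ck_on k S (\<lambda>x. frechet_derivative g (at x) i + frechet_derivative h (at x) i)"
      using Suc.IH Suc.prems i by auto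
    fix x assume x: "x \<in> S"
    have "g differentiable (at x)" "h differentiable (at x)" using Suc.prems x by auto
    then have "((\<lambda>x. g x + h x) has_derivative
       (\<lambda>v. frechet_derivative g (at x) v + frechet_derivative h (at x) v)) (at x)"
      by (intro has_derivative_add) (auto simp: frechet_derivative_works)
    from frechet_derivative_at[OF this] show
      "frechet_derivative g (at x) i + frechet_derivative h (at x) i =
       frechet_derivative (\<lambda>x. g x + h x) (at x) i" by metis
  qed
  then show ?case using Suc.prems by (auto intro: differentiable_add)
qed

lemma Ck_on_mult:
  assumes "open S" "Ck_on k S g" "Ck_on k S h"
  shows "Ck_on k S (\<lambda>x. g x * h x)"
  using assms(2,3)
proof (induction k arbitrary: g h)
  case 0 then show ?case by (auto intro: continuous_on_mult)
next
  case (Suc k)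
  have "Ck_on k S (\<lambda>x. frechet_derivative (\<lambda>x. g x * h x) (at x) i)" if i: "i \<in> Basis" for i
  proof (rule Ck_on_cong[OF \<open>open S\<close>])
    have "Ck_on k S g" "Ck_on k S h" using Suc.prems Ck_on_Suc_imp_Ck_on by blast+
    then show "Ck_on k S (\<lambda>x. g x * frechet_derivative h (at x) i + frechet_derivative g (at x) i * h x)"
      using Suc.IH Suc.prems i by (intro Ck_on_add \<open>open S\<close>) auto
    fix x assume x: "x \<in> S"
    have "g differentiable (at x)" "h differentiable (at x)" using Suc.prems x by auto
    then have "((\<lambda>x. g x * h x) has_derivative
       (\<lambda>v. g x * frechet_derivative h (at x) v + frechet_derivative g (at x) v * h x)) (at x)"
      by (intro has_derivative_mult) (auto simp: frechet_derivative_works)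
    from frechet_derivative_at[OF this] show
      "g x * frechet_derivative h (at x) i + frechet_derivative g (at x) i * h x =
       frechet_derivative (\<lambda>x. g x * h x) (at x) i" by metis
  qed
  then show ?case using Suc.prems by (auto intro: differentiable_mult)
qed

lemma Ck_on_cmult: "open S \<Longrightarrow> Ck_on k S g \<Longrightarrow> Ck_on k S (\<lambda>x. c * g x)"
  using Ck_on_mult[OF _ Ck_on_const] by blast

lemma Ck_on_sum:
  assumes "open S" "\<And>j. j \<in> I \<Longrightarrow> Ck_on k S (g j)"
  shows "Ck_on k S (\<lambda>x. \<Sum>j\<in>I. g j x)"
  using assms(2)
  by (induction I rule: infinite_finite_induct) (simp_all add: Ck_on_const Ck_on_add[OF assms(1)])

lemma Ck_on_compose:
  fixes \<phi> :: "real \<Rightarrow> real"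
  assumes "open S" "Ck_on k V \<phi>" "Ck_on k S g" "g ` S \<subseteq> V"
  shows "Ck_on k S (\<lambda>x. \<phi> (g x))"
  using assms(2-4)
proof (induction k arbitrary: \<phi> g)
  case 0 then show ?case by (auto intro: continuous_on_compose2)
next
  case (Suc k)
  have "(\<lambda>x. \<phi> (g x)) differentiable (at x)" if x: "x \<in> S" for x
    using differentiable_chain_at[of g x \<phi>] Suc.prems x by (auto simp: o_def)
  moreover have "Ck_on k S (\<lambda>x. frechet_derivative (\<lambda>x. \<phi> (g x)) (at x) i)" if i: "i \<in> Basis" for i
  proof (rule Ck_on_cong[OF \<open>open S\<close>])
    have "Ck_on k S g" using Suc.prems Ck_on_Suc_imp_Ck_on by blast
    moreover have "Ck_on k V (\<lambda>z. frechet_derivative \<phi> (at z) 1)" using Suc.prems by simp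
    ultimately show "Ck_on k S (\<lambda>x. frechet_derivative g (at x) i * frechet_derivative \<phi> (at (g x)) 1)"
      using Suc.IH Suc.prems i by (intro Ck_on_mult \<open>open S\<close>) auto
    fix x assume x: "x \<in> S"
    have dg: "g differentiable (at x)" and d\<phi>: "\<phi> differentiable (at (g x))" using Suc.prems x by auto
    obtain c where c: "frechet_derivative \<phi> (at (g x)) = (*) c"
      using real_linearD[OF linear_frechet_derivative[OF d\<phi>]] by blast
    have "frechet_derivative (\<lambda>x. \<phi> (g x)) (at x) i
        = frechet_derivative \<phi> (at (g x)) (frechet_derivative g (at x) i)"
      using frechet_derivative_compose[OF dg d\<phi>] by (simp add: o_def)
    then show "frechet_derivative g (at x) i * frechet_derivative \<phi> (at (g x)) 1 =
       frechet_derivative (\<lambda>x. \<phi> (g x)) (at x) i" by (simp add: c)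
  qed
  ultimately show ?case by simp
qed

lemma Ck_on_powr: "Ck_on k {0<..} (\<lambda>z::real. z powr c)"
proof (induction k arbitrary: c)
  case 0 then show ?case
    by (simp, rule continuous_at_imp_continuous_on) (auto intro!: DERIV_isCont has_real_derivative_powr)
next
  case (Suc k)
  have d: "((\<lambda>z. z powr c) has_derivative (\<lambda>h. (c * z powr (c - 1)) * h)) (at z)" if "z > 0" for z
    using has_real_derivative_powr[OF that, of c] by (simp add: has_field_derivative_def)
  have "Ck_on k {0<..} (\<lambda>x. frechet_derivative (\<lambda>z. z powr c) (at x) 1)"
  proof (rule Ck_on_cong[of "{0<..}"])
    show "Ck_on k {0<..} (\<lambda>z. c * z powr (c - 1))" by (rule Ck_on_cmult[OF open_greaterThan Suc.IH])
    fix x :: real assume "x \<in> {0<..}"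
    then show "c * x powr (c - 1) = frechet_derivative (\<lambda>z. z powr c) (at x) 1"
      using frechet_derivative_at[OF d[of x]] by (metis greaterThan_iff mult_1_right)
  qed auto
  then show ?case using d by (auto simp: differentiable_def)
qed

lemma Ck_on_compose_linear:
  fixes L :: "'m::euclidean_space \<Rightarrow> 'n::euclidean_space"
  assumes L: "linear L" and S': "open S'" and LS: "L ` S' \<subseteq> S" and G: "Ck_on k S G"
  shows "Ck_on k S' (\<lambda>z. G (L z))"
  using G
proof (induction k arbitrary: G)
  case 0
  have "continuous_on S' L" using L linear_continuous_on linear_conv_bounded_linear by blast
  then show ?case using 0 LS by (auto intro: continuous_on_compose2)
next
  case (Suc k)
  have bl: "bounded_linear L" using L linear_conv_bounded_linear by blast
  have dL: "L differentiable (at z)" for z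
    using bl bounded_linear_imp_differentiable by blast
  have fdL: "frechet_derivative L (at z) = L" for z
    using frechet_derivative_at[OF bounded_linear_imp_has_derivative[OF bl]] by simp
  have "(\<lambda>z. G (L z)) differentiable (at x)" if x: "x \<in> S'" for x
    using differentiable_chain_at[OF dL, of G x] Suc.prems x LS by (auto simp: o_def)
  moreover have "Ck_on k S' (\<lambda>x. frechet_derivative (\<lambda>z. G (L z)) (at x) i)" if i: "i \<in> Basis" for i
  proof (rule Ck_on_cong[OF S'])
    show "Ck_on k S' (\<lambda>x. \<Sum>j\<in>Basis. (L i \<bullet> j) * frechet_derivative G (at (L x)) j)"
      using Suc.IH Suc.prems by (intro Ck_on_sum S' Ck_on_cmult) auto
    fix x assume x: "x \<in> S'"
    have dG: "G differentiable (at (L x))" using Suc.prems x LS by auto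
    have "frechet_derivative (\<lambda>z. G (L z)) (at x) i = frechet_derivative G (at (L x)) (L i)"
      using frechet_derivative_compose[OF dL dG] fdL by (simp add: o_def)
    also have "\<dots> = frechet_derivative G (at (L x)) (\<Sum>j\<in>Basis. (L i \<bullet> j) *\<^sub>R j)"
      by (simp add: euclidean_representation)
    also have "\<dots> = (\<Sum>j\<in>Basis. (L i \<bullet> j) * frechet_derivative G (at (L x)) j)"
      using linear_frechet_derivative[OF dG] by (simp add: linear_sum linear_scale)
    finally show "(\<Sum>j\<in>Basis. (L i \<bullet> j) * frechet_derivative G (at (L x)) j) =
       frechet_derivative (\<lambda>z. G (L z)) (at x) i" by simp
  qed
  ultimately show ?case by simp
qed

lemma Ck_on_linear:
  fixes L :: "'m::euclidean_space \<Rightarrow> real"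
  assumes "linear L"
  shows "Ck_on k S L"
proof -
  have bl: "bounded_linear L" using assms linear_conv_bounded_linear by blast
  have "frechet_derivative L (at z) = L" for z
    using frechet_derivative_at[OF bounded_linear_imp_has_derivative[OF bl]] by simp
  then show ?thesis
    using linear_continuous_on[OF bl] bounded_linear_imp_differentiable[OF bl]
    by (cases k) (simp_all add: Ck_on_const)
qed

lemma Ck_on_power_mean:
  fixes S :: "'m::euclidean_space set"
  assumes S: "open S" and "Ck_on k S a" "Ck_on k S b" "Ck_on k S c1" "Ck_on k S c2"
    and "\<And>z. z \<in> S \<Longrightarrow> a z > 0" "\<And>z. z \<in> S \<Longrightarrow> b z > 0"
    and "\<And>z. z \<in> S \<Longrightarrow> c1 z * a z powr \<sigma> + c2 z * b z powr \<sigma> > 0"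
  shows "Ck_on k S (\<lambda>z. (c1 z * a z powr \<sigma> + c2 z * b z powr \<sigma>) powr (1 / \<sigma>))"
proof -
  have "Ck_on k S (\<lambda>z. a z powr \<sigma>)" "Ck_on k S (\<lambda>z. b z powr \<sigma>)"
    using assms by (auto intro!: Ck_on_compose[OF S Ck_on_powr])
  then have "Ck_on k S (\<lambda>z. c1 z * a z powr \<sigma> + c2 z * b z powr \<sigma>)"
    using assms by (intro Ck_on_add Ck_on_mult S)
  then show ?thesis
    using assms by (auto intro!: Ck_on_compose[OF S Ck_on_powr])
qed

lemma convex_powr_nonneg:
  fixes p t u v :: real
  assumes p: "1 \<le> p" and t: "0 \<le> t" "t \<le> 1" and "0 \<le> u" "0 \<le> v"
  shows "(t * u + (1 - t) * v) powr p \<le> t * u powr p + (1 - t) * v powr p"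
proof (cases "u = 0 \<or> v = 0")
  case True
  have scale: "(s * w) powr p \<le> s * w powr p" if "0 \<le> s" "s \<le> 1" "0 \<le> w" for s w :: real
  proof -
    have "s powr p \<le> s"
      using that p powr_mono'[of 1 p s] by (cases "s = 0") auto
    then have "s powr p * w powr p \<le> s * w powr p" by (intro mult_right_mono) auto
    then show ?thesis using that by (simp add: powr_mult)
  qed
  then show ?thesis
    using True t assms(4,5) scale[of "1 - t" v] scale[of t u] by auto
next
  case False
  then have "u > 0" "v > 0" using assms(4,5) by auto
  from convex_onD[OF powr_convex[OF p], of t v u] t this
  show ?thesis by (simp add: algebra_simps)
qed

text \<open>The pointwise inequality behind Minkowski's inequality: weights \<open>a, b\<close> will be the two
norms, so that integrating turns the right-hand side into \<open>(a + b)\<^sup>p\<close>.\<close>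

lemma powr_add_le_weighted:
  fixes p a b x y :: real
  assumes p: "1 \<le> p" and a: "0 < a" and b: "0 < b" and x: "0 \<le> x" and y: "0 \<le> y"
  shows "(x + y) powr p \<le> (a + b) powr (p - 1) * (x powr p / a powr (p - 1) + y powr p / b powr (p - 1))"
proof -
  define t where "t = a / (a + b)"
  have t: "0 \<le> t" "t \<le> 1" "1 - t = b / (a + b)" using a b by (auto simp: t_def field_simps)
  have "t * (x / a) = x / (a + b)" "(1 - t) * (y / b) = y / (a + b)"
    using a b unfolding t(3) by (simp_all add: t_def)
  then have "x + y = (a + b) * (t * (x / a) + (1 - t) * (y / b))"
    using a b by (simp add: add_divide_distrib[symmetric])
  then have "(x + y) powr p = (a + b) powr p * (t * (x / a) + (1 - t) * (y / b)) powr p"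
    using a b x y t by (simp add: powr_mult)
  also have "\<dots> \<le> (a + b) powr p * (t * (x / a) powr p + (1 - t) * (y / b) powr p)"
    using a b x y t by (intro mult_left_mono convex_powr_nonneg p) auto
  also have "\<dots> = (a + b) powr (p - 1) * (x powr p / a powr (p - 1) + y powr p / b powr (p - 1))"
  proof -
    have split: "c powr p = c * c powr (p - 1)" if "c > 0" for c :: real
      using that by (simp add: powr_diff)
    have pos: "a powr (p - 1) > 0" "b powr (p - 1) > 0" using a b by auto
    have frac: "(c / s) * (X / (c * C)) = X / (s * C)" if "c > 0" "s > 0" "C > 0" for c s C X :: real
      using that by (simp add: field_simps)
    have f1: "t * (x / a) powr p = x powr p / ((a + b) * a powr (p - 1))"
      using frac[of a "a + b" "a powr (p - 1)" "x powr p"] a b x pos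
      by (simp add: t_def powr_divide split[of a])
    have f2: "(1 - t) * (y / b) powr p = y powr p / ((a + b) * b powr (p - 1))"
      using frac[of b "a + b" "b powr (p - 1)" "y powr p"] a b y pos
      unfolding t(3) by (simp add: powr_divide split[of b])
    have g: "c * P * (X / (c * A) + Y / (c * B)) = P * (X / A + Y / B)"
      if "c > 0" "A > 0" "B > 0" for c P X Y A B :: real
      using that by (simp add: field_simps)
    show ?thesis unfolding f1 f2 split[of "a + b", OF add_pos_pos[OF a b]]
      by (rule g) (use a b pos in auto)
  qed
  finally show ?thesis .
qed

lemma powr_diff_le_mean_value:
  fixes s u v :: real
  assumes s: "1 \<le> s" and u: "0 < u" and uv: "u \<le> v"
  shows "v powr s - u powr s \<le> s * v powr (s - 1) * (v - u)"
proof (cases "u = v")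
  case False
  then have uv': "u < v" using uv by simp
  have "\<And>x. u \<le> x \<Longrightarrow> x \<le> v \<Longrightarrow> DERIV (\<lambda>x. x powr s) x :> s * x powr (s - 1)"
    using u by (auto intro!: has_real_derivative_powr)
  from MVT2[OF uv' this] obtain z where z: "u < z" "z < v" "v powr s - u powr s = (v - u) * (s * z powr (s - 1))"
    by blast
  have "z powr (s - 1) \<le> v powr (s - 1)" using z u s by (intro powr_mono2) auto
  then have "(v - u) * (s * z powr (s - 1)) \<le> (v - u) * (s * v powr (s - 1))"
    using uv s by (intro mult_left_mono) auto
  then show ?thesis using z(3) by (simp add: algebra_simps)
qed simp

text \<open>The left-hand side is the \<open>t\<close>-derivative of \<open>((1 - t) u\<^sup>s + t v\<^sup>s)\<^bsup>1/s\<^esup>\<close>.\<close>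

lemma power_mean_derivative_le:
  fixes s t u v :: real
  assumes s: "1 \<le> s" and t: "0 < t" "t \<le> 1" and u: "0 < u" and uv: "u \<le> v"
  shows "(1 / s) * ((1 - t) * u powr s + t * v powr s) powr (1 / s - 1) * (v powr s - u powr s)
         \<le> t powr (1 / s - 1) * (v - u)"
proof -
  have v: "0 < v" using u uv by simp
  define e where "e = 1 / s - 1"
  have "((1 - t) * u powr s + t * v powr s) powr e \<le> (t * v powr s) powr e"
    using s t v by (intro powr_mono2') (auto simp: e_def)
  also have "\<dots> = t powr e * v powr (1 - s)"
    using t v s by (simp add: powr_mult powr_powr e_def algebra_simps)
  finally have Ie: "((1 - t) * u powr s + t * v powr s) powr e \<le> t powr e * v powr (1 - s)" .
  have "0 \<le> v powr s - u powr s" using u uv s by (simp add: powr_mono2)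
  then have "(1 / s) * ((1 - t) * u powr s + t * v powr s) powr e * (v powr s - u powr s)
      \<le> (1 / s) * (t powr e * v powr (1 - s)) * (s * v powr (s - 1) * (v - u))"
    using Ie powr_diff_le_mean_value[OF s u uv] s by (intro mult_mono mult_left_mono) auto
  also have "\<dots> = t powr e * (v powr (1 - s) * v powr (s - 1)) * (v - u)"
    using s by (simp add: field_simps)
  also have "v powr (1 - s) * v powr (s - 1) = 1" using v by (simp add: powr_add[symmetric])
  finally show ?thesis by (simp add: e_def)
qed

lemma power_mean_derivative_abs_le:
  fixes s t u v :: real
  assumes s: "1 \<le> s" and t: "0 < t" "t < 1" and u: "0 < u" and v: "0 < v"
  shows "\<bar>(1 / s) * ((1 - t) * u powr s + t * v powr s) powr (1 / s - 1) * (v powr s - u powr s)\<bar>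
         \<le> (t powr (1 / s - 1) + (1 - t) powr (1 / s - 1)) * \<bar>v - u\<bar>"
proof (cases "u \<le> v")
  case True
  have "0 \<le> v powr s - u powr s" using u True s by (simp add: powr_mono2)
  then have "\<bar>(1 / s) * ((1 - t) * u powr s + t * v powr s) powr (1 / s - 1) * (v powr s - u powr s)\<bar>
     \<le> t powr (1 / s - 1) * (v - u)"
    using power_mean_derivative_le[OF s t(1) _ u True] s t by simp
  moreover have "0 \<le> (1 - t) powr (1 / s - 1) * (v - u)" using True by simp
  moreover have "(t powr (1 / s - 1) + (1 - t) powr (1 / s - 1)) * \<bar>v - u\<bar>
      = t powr (1 / s - 1) * (v - u) + (1 - t) powr (1 / s - 1) * (v - u)"
    using True by (simp add: distrib_right)
  ultimately show ?thesis by linarith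
next
  case False
  have "0 \<le> u powr s - v powr s" using v False s by (simp add: powr_mono2)
  then have "\<bar>(1 / s) * ((1 - t) * u powr s + t * v powr s) powr (1 / s - 1) * (v powr s - u powr s)\<bar>
     \<le> (1 - t) powr (1 / s - 1) * (u - v)"
    using power_mean_derivative_le[of s "1 - t" v u] s t v False by (simp add: abs_mult add.commute)
  moreover have "0 \<le> t powr (1 / s - 1) * (u - v)" using False by simp
  moreover have "(t powr (1 / s - 1) + (1 - t) powr (1 / s - 1)) * \<bar>v - u\<bar>
      = t powr (1 / s - 1) * (u - v) + (1 - t) powr (1 / s - 1) * (u - v)"
    using False by (simp add: distrib_right)
  ultimately show ?thesis by linarith
qed

lemma has_integral_powr_plus_reflected:
  fixes s :: real assumes s: "1 \<le> s"
  shows "((\<lambda>t. t powr (1 / s - 1) + (1 - t) powr (1 / s - 1)) has_integral 2 * s) {0..1}"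
proof -
  have h: "((\<lambda>x. x powr (1 / s - 1)) has_integral s) {0..1}"
    using has_integral_powr_from_0[of "1 / s - 1" 1] s by simp
  then have "((\<lambda>x. (- x) powr (1 / s - 1)) has_integral s) {-1..0}"
    using has_integral_reflect_real[THEN iffD2, OF h] by simp
  then have "((\<lambda>t. (1 - t) powr (1 / s - 1)) has_integral s) {0..1}"
    using has_integral_shift_Icc_real[of "\<lambda>x. (- x) powr (1 / s - 1)" "-1" s 0 1] by (simp add: o_def)
  from has_integral_add[OF h this] show ?thesis by simp
qed

text \<open>Used to thicken \<open>[0,1]\<close> to an open interval of times on which the power-mean curve is
still defined and smooth.\<close>

lemma affine_combination_pos_near_unit_interval:
  fixes m M A B t :: real
  assumes m: "0 < m" and A: "m \<le> A" "A \<le> M" and B: "m \<le> B" "B \<le> M"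
    and t: "- (m / (2 * M)) < t" "t < 1 + m / (2 * M)"
  shows "(1 - t) * A + t * B > 0"
proof -
  have MM: "M > 0" using m A by simp
  have dM: "m / (2 * M) * M = m / 2" using MM by simp
  consider "t \<le> 0" | "0 \<le> t \<and> t \<le> 1" | "1 \<le> t" by linarith
  then show ?thesis
  proof cases
    case 1
    have "(- t) * (A - B) \<ge> (- t) * (- M)" using A B m 1 by (intro mult_left_mono) auto
    moreover have "(- t) * M \<le> m / (2 * M) * M" using t 1 MM by (intro mult_right_mono) auto
    ultimately show ?thesis using A dM m by (simp add: algebra_simps)
  next
    case 2
    have "(1 - t) * A \<ge> (1 - t) * m" "t * B \<ge> t * m" using 2 A B by (auto intro: mult_left_mono)
    then show ?thesis using m by (simp add: algebra_simps)
  next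
    case 3
    have "(t - 1) * (B - A) \<ge> (t - 1) * (- M)" using A B m 3 by (intro mult_left_mono) auto
    moreover have "(t - 1) * M \<le> m / (2 * M) * M" using t 3 MM by (intro mult_right_mono) auto
    ultimately show ?thesis using B dM m by (simp add: algebra_simps)
  qed
qed

section \<open>The normalized \<open>L\<^sup>p\<close> norm on a finite measure space\<close>

locale Lp_space = finite_measure M for M :: "'a measure" +
  fixes p :: real
  assumes p_ge_1: "1 \<le> p" and measure_space_pos: "measure M (space M) > 0"
begin

definition bdd_measurable :: "('a \<Rightarrow> real) \<Rightarrow> bool" where
  "bdd_measurable F \<longleftrightarrow> F \<in> borel_measurable M \<and> (\<exists>B. \<forall>x\<in>space M. \<bar>F x\<bar> \<le> B)"

definition mean :: "('a \<Rightarrow> real) \<Rightarrow> real" where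
  "mean F = (1 / measure M (space M)) * integral\<^sup>L M F"

lemma Lp_norm_eq_mean: "Lp_norm M p F = (mean (\<lambda>x. \<bar>F x\<bar> powr p)) powr (1 / p)"
  by (simp add: Lp_norm_def mean_def)

lemma mean_nonneg: "(\<And>x. x \<in> space M \<Longrightarrow> 0 \<le> F x) \<Longrightarrow> 0 \<le> mean F"
  using measure_space_pos by (simp add: mean_def integral_nonneg)

lemma mean_mono:
  "integrable M F \<Longrightarrow> integrable M G \<Longrightarrow> (\<And>x. x \<in> space M \<Longrightarrow> F x \<le> G x) \<Longrightarrow> mean F \<le> mean G"
  using measure_space_pos by (simp add: mean_def integral_mono divide_right_mono)

lemma mean_cmult: "mean (\<lambda>x. c * F x) = c * mean F"
  by (simp add: mean_def)

lemma mean_add: "integrable M F \<Longrightarrow> integrable M G \<Longrightarrow> mean (\<lambda>x. F x + G x) = mean F + mean G"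
  by (simp add: mean_def algebra_simps)

lemma mean_cong: "(\<And>x. x \<in> space M \<Longrightarrow> F x = G x) \<Longrightarrow> mean F = mean G"
  by (simp add: mean_def cong: Bochner_Integration.integral_cong)

lemma Lp_norm_nonneg: "0 \<le> Lp_norm M p F"
  by (simp add: Lp_norm_def)

lemma Lp_norm_zero: "Lp_norm M p (\<lambda>x. 0) = 0"
  using p_ge_1 by (simp add: Lp_norm_def)

lemma Lp_norm_cong: "(\<And>x. x \<in> space M \<Longrightarrow> F x = G x) \<Longrightarrow> Lp_norm M p F = Lp_norm M p G"
  unfolding Lp_norm_eq_mean by (metis (no_types, lifting) mean_cong)

lemma integrable_abs_powr: "bdd_measurable F \<Longrightarrow> integrable M (\<lambda>x. \<bar>F x\<bar> powr p)"
  unfolding bdd_measurable_def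
proof (elim conjE exE)
  fix B assume m: "F \<in> borel_measurable M" and B: "\<forall>x\<in>space M. \<bar>F x\<bar> \<le> B"
  show "integrable M (\<lambda>x. \<bar>F x\<bar> powr p)"
  proof (rule integrable_const_bound[where B="B powr p"])
    show "AE x in M. norm (\<bar>F x\<bar> powr p) \<le> B powr p"
      using B p_ge_1 by (intro AE_I2) (auto intro!: powr_mono2)
  qed (use m in measurable)
qed

lemma bdd_measurable_add: "bdd_measurable F \<Longrightarrow> bdd_measurable G \<Longrightarrow> bdd_measurable (\<lambda>x. F x + G x)"
  unfolding bdd_measurable_def
  by (auto intro!: exI[of _ "_ + _"] abs_triangle_ineq[THEN order_trans] add_mono)

lemma bdd_measurable_cmult: "bdd_measurable F \<Longrightarrow> bdd_measurable (\<lambda>x. c * F x)"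
  unfolding bdd_measurable_def
  by (auto intro!: exI[of _ "\<bar>c\<bar> * _"] mult_left_mono simp: abs_mult)

lemma bdd_measurable_diff: "bdd_measurable F \<Longrightarrow> bdd_measurable G \<Longrightarrow> bdd_measurable (\<lambda>x. F x - G x)"
  using bdd_measurable_add[of F "\<lambda>x. (-1) * G x"] bdd_measurable_cmult[of G "-1"] by simp

lemma Lp_norm_powr: "Lp_norm M p F powr p = mean (\<lambda>x. \<bar>F x\<bar> powr p)"
  using mean_nonneg[of "\<lambda>x. \<bar>F x\<bar> powr p"] p_ge_1 by (simp add: Lp_norm_eq_mean powr_powr)

lemma Lp_norm_le_of_mean_le:
  assumes "0 \<le> c" "mean (\<lambda>x. \<bar>F x\<bar> powr p) \<le> c powr p"
  shows "Lp_norm M p F \<le> c"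
proof -
  have "Lp_norm M p F \<le> (c powr p) powr (1 / p)"
    unfolding Lp_norm_eq_mean using assms p_ge_1 by (intro powr_mono2) (auto intro: mean_nonneg)
  then show ?thesis using assms p_ge_1 by (simp add: powr_powr)
qed

lemma Lp_norm_cmult: "Lp_norm M p (\<lambda>x. c * F x) = \<bar>c\<bar> * Lp_norm M p F"
proof -
  have "mean (\<lambda>x. \<bar>c * F x\<bar> powr p) = \<bar>c\<bar> powr p * mean (\<lambda>x. \<bar>F x\<bar> powr p)"
    by (simp add: abs_mult powr_mult mean_cmult[symmetric])
  then show ?thesis
    using mean_nonneg[of "\<lambda>x. \<bar>F x\<bar> powr p"] p_ge_1
    by (simp add: Lp_norm_eq_mean powr_mult powr_powr)
qed

lemma Lp_norm_minus_commute: "Lp_norm M p (\<lambda>x. F x - G x) = Lp_norm M p (\<lambda>x. G x - F x)"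
  using Lp_norm_cmult[of "-1" "\<lambda>x. G x - F x"] by simp

lemma Lp_norm_mono:
  assumes F: "F \<in> borel_measurable M" and G: "bdd_measurable G"
    and le: "\<And>x. x \<in> space M \<Longrightarrow> \<bar>F x\<bar> \<le> \<bar>G x\<bar>"
  shows "Lp_norm M p F \<le> Lp_norm M p G"
proof -
  have iG: "integrable M (\<lambda>x. \<bar>G x\<bar> powr p)" by (rule integrable_abs_powr[OF G])
  have iF: "integrable M (\<lambda>x. \<bar>F x\<bar> powr p)"
  proof (rule Bochner_Integration.integrable_bound[OF iG])
    show "AE x in M. norm (\<bar>F x\<bar> powr p) \<le> norm (\<bar>G x\<bar> powr p)"
      using le p_ge_1 by (intro AE_I2) (auto intro!: powr_mono2)
  qed (use F in measurable)
  have "mean (\<lambda>x. \<bar>F x\<bar> powr p) \<le> mean (\<lambda>x. \<bar>G x\<bar> powr p)"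
    using le p_ge_1 by (intro mean_mono iF iG) (auto intro!: powr_mono2)
  then show ?thesis unfolding Lp_norm_eq_mean using p_ge_1
    by (intro powr_mono2) (auto intro: mean_nonneg)
qed

text \<open>The weights of the pointwise inequality are the two norms, enlarged by \<open>e/2\<close> to make
them positive.\<close>

lemma Lp_norm_triangle:
  assumes F: "bdd_measurable F" and G: "bdd_measurable G"
  shows "Lp_norm M p (\<lambda>x. F x + G x) \<le> Lp_norm M p F + Lp_norm M p G"
proof (rule field_le_epsilon)
  fix e :: real assume e: "0 < e"
  define a where "a = Lp_norm M p F + e / 2"
  define b where "b = Lp_norm M p G + e / 2"
  have a: "0 < a" and b: "0 < b" using e Lp_norm_nonneg by (auto simp: a_def b_def add_nonneg_pos)
  have A: "mean (\<lambda>x. \<bar>F x\<bar> powr p) \<le> a powr p"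
    unfolding Lp_norm_powr[symmetric] a_def using e p_ge_1 Lp_norm_nonneg by (intro powr_mono2) auto
  have B: "mean (\<lambda>x. \<bar>G x\<bar> powr p) \<le> b powr p"
    unfolding Lp_norm_powr[symmetric] b_def using e p_ge_1 Lp_norm_nonneg by (intro powr_mono2) auto
  have iF: "integrable M (\<lambda>x. \<bar>F x\<bar> powr p)" by (rule integrable_abs_powr[OF F])
  have iG: "integrable M (\<lambda>x. \<bar>G x\<bar> powr p)" by (rule integrable_abs_powr[OF G])
  have "mean (\<lambda>x. \<bar>F x + G x\<bar> powr p) \<le>
        mean (\<lambda>x. (a + b) powr (p - 1) * (\<bar>F x\<bar> powr p / a powr (p - 1) + \<bar>G x\<bar> powr p / b powr (p - 1)))"
  proof (rule mean_mono)
    show "integrable M (\<lambda>x. \<bar>F x + G x\<bar> powr p)"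
      by (rule integrable_abs_powr[OF bdd_measurable_add[OF F G]])
    fix x
    have "\<bar>F x + G x\<bar> powr p \<le> (\<bar>F x\<bar> + \<bar>G x\<bar>) powr p"
      using p_ge_1 by (intro powr_mono2) auto
    also have "\<dots> \<le> (a + b) powr (p - 1) * (\<bar>F x\<bar> powr p / a powr (p - 1) + \<bar>G x\<bar> powr p / b powr (p - 1))"
      by (rule powr_add_le_weighted[OF p_ge_1 a b]) auto
    finally show "\<bar>F x + G x\<bar> powr p \<le> (a + b) powr (p - 1) * (\<bar>F x\<bar> powr p / a powr (p - 1) + \<bar>G x\<bar> powr p / b powr (p - 1))" .
  qed (use iF iG in auto)
  also have "\<dots> = (a + b) powr (p - 1) * (mean (\<lambda>x. \<bar>F x\<bar> powr p) / a powr (p - 1) + mean (\<lambda>x. \<bar>G x\<bar> powr p) / b powr (p - 1))"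
    using iF iG by (simp add: mean_def algebra_simps)
  also have "\<dots> \<le> (a + b) powr (p - 1) * (a powr p / a powr (p - 1) + b powr p / b powr (p - 1))"
    using A B a b by (intro mult_left_mono add_mono divide_right_mono) auto
  also have "\<dots> = (a + b) powr p"
    using a b by (simp add: powr_diff)
  finally have "Lp_norm M p (\<lambda>x. F x + G x) \<le> a + b"
    using a b by (intro Lp_norm_le_of_mean_le) auto
  then show "Lp_norm M p (\<lambda>x. F x + G x) \<le> Lp_norm M p F + Lp_norm M p G + e"
    by (simp add: a_def b_def)
qed

end

section \<open>The \<open>L\<^sup>p\<close> norm of an increment is bounded by the length\<close>

lemma right_nonincreasing_imp_le:
  fixes \<phi> :: "real \<Rightarrow> real"
  assumes ab: "a \<le> b" and cont: "continuous_on {a..b} \<phi>"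
    and loc: "\<And>t. t \<in> {a..<b} \<Longrightarrow> \<exists>d>0. \<forall>h. 0 < h \<and> h < d \<and> t + h \<le> b \<longrightarrow> \<phi> (t + h) \<le> \<phi> t"
  shows "\<phi> b \<le> \<phi> a"
proof (rule ccontr)
  assume nb: "\<not> \<phi> b \<le> \<phi> a"
  define K where "K = {t \<in> {a..b}. \<phi> t \<le> \<phi> a}"
  have "K = {a..b} \<inter> \<phi> -` {..\<phi> a}" by (auto simp: K_def)
  then have "closed K"
    using continuous_closed_preimage[OF cont closed_atLeastAtMost closed_atMost] by simp
  moreover have "a \<in> K" "bdd_above K" using ab by (auto simp: K_def intro: bdd_aboveI[of _ b])
  ultimately have sK: "Sup K \<in> K" and sle: "\<And>t. t \<in> K \<Longrightarrow> t \<le> Sup K"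
    using closed_contains_Sup cSup_upper by blast+
  then have s: "Sup K \<in> {a..<b}" using nb by (auto simp: K_def order.order_iff_strict)
  obtain d where d: "d > 0" "\<And>h. 0 < h \<and> h < d \<and> Sup K + h \<le> b \<longrightarrow> \<phi> (Sup K + h) \<le> \<phi> (Sup K)"
    using loc[OF s] by blast
  define h where "h = min (d / 2) (b - Sup K)"
  have h: "0 < h" "h < d" "Sup K + h \<le> b" using d s by (auto simp: h_def)
  then have "Sup K + h \<in> K" using d(2)[of h] sK s by (auto simp: K_def)
  then show False using sle h by fastforce
qed

text \<open>An integral form of the mean value inequality for a right upper Dini derivative: with
\<open>I t = \<integral>\<^sub>a\<^sup>t S\<close>, the function \<open>L t - I t - e (t - a)\<close> is locally non-increasing to the right for
every \<open>e > 0\<close>.\<close>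

lemma diff_le_integral_of_right_derivative_bound:
  fixes L S :: "real \<Rightarrow> real"
  assumes ab: "a \<le> b" and L: "continuous_on {a..b} L" and S: "continuous_on {a..b} S"
    and right: "\<And>t e. t \<in> {a..<b} \<Longrightarrow> 0 < e \<Longrightarrow>
      \<exists>d>0. \<forall>h. 0 < h \<and> h < d \<and> t + h \<le> b \<longrightarrow> L (t + h) \<le> L t + h * (S t + e)"
  shows "L b - L a \<le> integral {a..b} S"
proof -
  define I where "I t = integral {a..t} S" for t
  have I_der: "(I has_vector_derivative S t) (at t within {a..b})" if "t \<in> {a..b}" for t
    unfolding I_def by (rule integral_has_vector_derivative[OF S that])
  have key: "L b - L a \<le> I b + e * (b - a)" if e: "e > 0" for e
  proof -
    define \<phi> where "\<phi> t = L t - I t - e * (t - a)" for t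
    have "continuous_on {a..b} I"
      using I_der continuous_on_eq_continuous_within has_vector_derivative_continuous by blast
    then have \<phi>_cont: "continuous_on {a..b} \<phi>"
      unfolding \<phi>_def by (intro continuous_intros L)
    have "\<exists>d>0. \<forall>h. 0 < h \<and> h < d \<and> t0 + h \<le> b \<longrightarrow> \<phi> (t0 + h) \<le> \<phi> t0"
      if t0: "t0 \<in> {a..<b}" for t0
    proof -
      obtain d1 where d1: "d1 > 0" "\<And>h. 0 < h \<Longrightarrow> h < d1 \<Longrightarrow> t0 + h \<le> b \<Longrightarrow>
          L (t0 + h) \<le> L t0 + h * (S t0 + e / 2)"
        using right[OF t0, of "e / 2"] e by auto
      obtain d2 where d2: "d2 > 0" "\<And>y. y \<in> {a..b} \<Longrightarrow> norm (y - t0) < d2 \<Longrightarrow>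
            norm (I y - I t0 - (y - t0) *\<^sub>R S t0) \<le> e / 2 * norm (y - t0)"
        using I_der[of t0] t0 e unfolding has_vector_derivative_def has_derivative_within_alt
        by (metis atLeastLessThan_iff atLeastAtMost_iff half_gt_zero less_imp_le)
      show ?thesis
      proof (intro exI[of _ "min d1 d2"] conjI allI impI)
        fix h assume h: "0 < h \<and> h < min d1 d2 \<and> t0 + h \<le> b"
        then have "\<bar>I (t0 + h) - I t0 - h * S t0\<bar> \<le> e / 2 * h"
          using d2(2)[of "t0 + h"] t0 by simp
        then have "I (t0 + h) - I t0 \<ge> h * S t0 - e / 2 * h"
          using abs_le_D2 by fastforce
        then show "\<phi> (t0 + h) \<le> \<phi> t0"
          using d1(2)[of h] h unfolding \<phi>_def by (simp add: algebra_simps)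
      qed (use d1 d2 in simp)
    qed
    then have "\<phi> b \<le> \<phi> a" by (rule right_nonincreasing_imp_le[OF ab \<phi>_cont])
    then show ?thesis by (simp add: \<phi>_def I_def)
  qed
  show ?thesis
  proof (cases "a = b")
    case False
    show ?thesis
    proof (rule field_le_epsilon)
      fix e :: real assume "e > 0"
      then show "L b - L a \<le> integral {a..b} S + e"
        using key[of "e / (b - a)"] ab False by (simp add: I_def)
    qed
  qed simp
qed

lemma difference_quotient_bounded:
  fixes f f' :: "real \<Rightarrow> real"
  assumes der: "\<And>s. s \<in> {a..b} \<Longrightarrow> (f has_vector_derivative f' s) (at s within {a..b})"
    and bnd: "\<And>s. s \<in> {a..b} \<Longrightarrow> \<bar>f' s\<bar> \<le> B"
    and t: "t \<in> {a..b}" "t + h \<in> {a..b}" and h: "0 < h"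
  shows "\<bar>(f (t + h) - f t) / h - f' t\<bar> \<le> 2 * B"
proof -
  have "norm (f (t + h) - f t - ((t + h) - t) *\<^sub>R f' t) \<le> norm ((t + h) - t) * (2 * B)"
  proof (rule vector_differentiable_bound_linearization[OF der])
    show "closed_segment t (t + h) \<subseteq> {a..b}"
      using t h by (auto simp: closed_segment_eq_real_ivl)
    show "norm (f' s - f' t) \<le> 2 * B" if "s \<in> {a..b}" for s
      using bnd[OF that] bnd[OF t(1)] by simp
  qed (use t in auto)
  moreover have "(f (t + h) - f t) / h - f' t = (f (t + h) - f t - h * f' t) / h"
    using h by (simp add: field_simps)
  ultimately show ?thesis using h by (simp add: abs_divide divide_le_eq mult.commute)
qed

lemma difference_quotient_small:
  fixes f :: "real \<Rightarrow> real"
  assumes "(f has_vector_derivative f') (at t within {a..b})" "0 < e"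
  obtains d where "0 < d"
    "\<And>h. 0 < h \<Longrightarrow> h < d \<Longrightarrow> t + h \<in> {a..b} \<Longrightarrow> \<bar>(f (t + h) - f t) / h - f'\<bar> \<le> e"
proof -
  obtain d where d: "0 < d" "\<And>y. y \<in> {a..b} \<Longrightarrow> norm (y - t) < d \<Longrightarrow>
      norm (f y - f t - (y - t) *\<^sub>R f') \<le> e * norm (y - t)"
    using assms unfolding has_vector_derivative_def has_derivative_within_alt by metis
  show ?thesis
  proof (rule that[OF d(1)])
    fix h :: real assume "0 < h" "h < d" "t + h \<in> {a..b}"
    moreover have "(f (t + h) - f t) / h - f' = (f (t + h) - f t - h * f') / h"
      using \<open>0 < h\<close> by (simp add: field_simps)
    ultimately show "\<bar>(f (t + h) - f t) / h - f'\<bar> \<le> e"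
      using d(2)[of "t + h"] by (simp add: abs_divide divide_le_eq mult.commute)
  qed
qed

lemma continuous_on_Times_slice_snd:
  assumes "continuous_on (S \<times> T) (\<lambda>z. g (fst z) (snd z))" "s \<in> S"
  shows "continuous_on T (g s)"
proof -
  have "continuous_on T (\<lambda>x. (\<lambda>z. g (fst z) (snd z)) (s, x))"
    by (rule continuous_on_compose2[OF assms(1)]) (use assms(2) in \<open>auto intro!: continuous_intros\<close>)
  then show ?thesis by simp
qed

lemma continuous_on_Times_slice_fst:
  assumes "continuous_on (S \<times> T) (\<lambda>z. g (fst z) (snd z))" "x \<in> T"
  shows "continuous_on S (\<lambda>s. g s x)"
proof -
  have "continuous_on S (\<lambda>s. (\<lambda>z. g (fst z) (snd z)) (s, x))"
    by (rule continuous_on_compose2[OF assms(1)]) (use assms(2) in \<open>auto intro!: continuous_intros\<close>)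
  then show ?thesis by simp
qed

locale compact_Lp_space = Lp_space M p for M :: "'a::topological_space measure" and p +
  assumes sets_M: "sets M = sets (restrict_space borel (space M))"
    and compact_space: "compact (space M)"
begin

lemma continuous_on_imp_borel_measurable:
  "continuous_on (space M) F \<Longrightarrow> (F :: 'a \<Rightarrow> real) \<in> borel_measurable M"
  using borel_measurable_continuous_on_restrict measurable_cong_sets[OF sets_M refl] by blast

lemma continuous_on_imp_bdd_measurable:
  assumes "continuous_on (space M) F"
  shows "bdd_measurable F"
proof -
  have "bounded (F ` space M)"
    by (rule compact_imp_bounded[OF compact_continuous_image[OF assms compact_space]])
  then show ?thesis
    using continuous_on_imp_borel_measurable[OF assms] by (force simp: bdd_measurable_def bounded_iff)
qed

lemma continuous_on_imp_integrable:
  assumes "continuous_on (space M) F"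
  shows "integrable M (F :: 'a \<Rightarrow> real)"
proof -
  obtain B where "F \<in> borel_measurable M" "\<forall>x\<in>space M. \<bar>F x\<bar> \<le> B"
    using continuous_on_imp_bdd_measurable[OF assms] unfolding bdd_measurable_def by blast
  then show ?thesis by (intro integrable_const_bound[where B=B]) auto
qed

text \<open>Dominated convergence.\<close>

lemma continuous_within_Lp_norm:
  fixes F :: "real \<Rightarrow> 'a \<Rightarrow> real"
  assumes meas: "\<And>t. t \<in> T \<Longrightarrow> F t \<in> borel_measurable M"
    and bnd: "\<And>t x. t \<in> T \<Longrightarrow> x \<in> space M \<Longrightarrow> \<bar>F t x\<bar> \<le> B"
    and cont: "\<And>x. x \<in> space M \<Longrightarrow> continuous (at t0 within T) (\<lambda>t. F t x)"
    and t0: "t0 \<in> T"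
  shows "continuous (at t0 within T) (\<lambda>t. Lp_norm M p (F t))"
proof -
  have "continuous (at t0 within T) (\<lambda>t. mean (\<lambda>x. \<bar>F t x\<bar> powr p))"
  proof (rule continuous_within_sequentiallyI)
    fix u :: "nat \<Rightarrow> real" assume u: "u \<longlonglongrightarrow> t0" and uT: "\<forall>n. u n \<in> T"
    have "(\<lambda>n. integral\<^sup>L M (\<lambda>x. \<bar>F (u n) x\<bar> powr p)) \<longlonglongrightarrow> integral\<^sup>L M (\<lambda>x. \<bar>F t0 x\<bar> powr p)"
    proof (rule integral_dominated_convergence[where w="\<lambda>x. B powr p"])
      show "(\<lambda>x. \<bar>F t0 x\<bar> powr p) \<in> borel_measurable M" using meas[OF t0] by measurable
      show "(\<lambda>x. \<bar>F (u n) x\<bar> powr p) \<in> borel_measurable M" for n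
        using meas[of "u n", OF uT[rule_format]] by measurable
      show "AE x in M. (\<lambda>n. \<bar>F (u n) x\<bar> powr p) \<longlonglongrightarrow> \<bar>F t0 x\<bar> powr p"
      proof (rule AE_I2)
        fix x assume x: "x \<in> space M"
        have "(\<lambda>n. F (u n) x) \<longlonglongrightarrow> F t0 x"
          using cont[OF x] u uT unfolding continuous_within_sequentially by (auto simp: o_def)
        then show "(\<lambda>n. \<bar>F (u n) x\<bar> powr p) \<longlonglongrightarrow> \<bar>F t0 x\<bar> powr p"
          using p_ge_1 by (intro tendsto_powr2 tendsto_rabs) auto
      qed
      show "AE x in M. norm (\<bar>F (u n) x\<bar> powr p) \<le> B powr p" for n
        using bnd uT p_ge_1 by (intro AE_I2) (auto intro!: powr_mono2)
    qed simp
    then show "(\<lambda>n. mean (\<lambda>x. \<bar>F (u n) x\<bar> powr p)) \<longlonglongrightarrow> mean (\<lambda>x. \<bar>F t0 x\<bar> powr p)"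
      unfolding mean_def by (intro tendsto_mult_left)
  qed
  then show ?thesis unfolding Lp_norm_eq_mean continuous_within
    using p_ge_1 by (intro tendsto_powr2) (auto intro!: always_eventually mean_nonneg)
qed

lemma continuous_on_Lp_norm:
  fixes F :: "real \<Rightarrow> 'a \<Rightarrow> real"
  assumes F: "continuous_on (S \<times> space M) (\<lambda>z. F (fst z) (snd z))" and S: "compact S"
  shows "continuous_on S (\<lambda>t. Lp_norm M p (F t))"
proof -
  have "bounded ((\<lambda>z. F (fst z) (snd z)) ` (S \<times> space M))"
    by (intro compact_imp_bounded compact_continuous_image[OF F] compact_Times S compact_space)
  then obtain B where B: "\<And>t x. t \<in> S \<Longrightarrow> x \<in> space M \<Longrightarrow> \<bar>F t x\<bar> \<le> B"
    unfolding bounded_iff by force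
  show ?thesis unfolding continuous_on_eq_continuous_within
  proof
    fix t0 assume "t0 \<in> S"
    then show "continuous (at t0 within S) (\<lambda>t. Lp_norm M p (F t))"
      using continuous_on_Times_slice_snd[OF F] continuous_on_Times_slice_fst[OF F] B
      by (intro continuous_within_Lp_norm continuous_on_imp_borel_measurable)
        (auto simp: continuous_on_eq_continuous_within)
  qed
qed

lemma Lp_norm_difference_quotient_small:
  fixes \<gamma> w :: "real \<Rightarrow> 'a \<Rightarrow> real"
  assumes gc: "continuous_on ({a..b} \<times> space M) (\<lambda>z. \<gamma> (fst z) (snd z))"
    and wc: "continuous_on ({a..b} \<times> space M) (\<lambda>z. w (fst z) (snd z))"
    and der: "\<And>x t. x \<in> space M \<Longrightarrow> t \<in> {a..b} \<Longrightarrow>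
               ((\<lambda>s. \<gamma> s x) has_vector_derivative w t x) (at t within {a..b})"
    and t0: "t0 \<in> {a..b}" and e: "0 < e"
  obtains d where "0 < d" "\<And>h. 0 < h \<Longrightarrow> h < d \<Longrightarrow> t0 + h \<le> b \<Longrightarrow>
      Lp_norm M p (\<lambda>x. (\<gamma> (t0 + h) x - \<gamma> t0 x) / h - w t0 x) < e"
proof -
  have "bounded ((\<lambda>z. w (fst z) (snd z)) ` ({a..b} \<times> space M))"
    by (intro compact_imp_bounded compact_continuous_image[OF wc] compact_Times compact_Icc compact_space)
  then obtain B where B: "\<And>t x. t \<in> {a..b} \<Longrightarrow> x \<in> space M \<Longrightarrow> \<bar>w t x\<bar> \<le> B"
    unfolding bounded_iff by force
  have \<gamma>t: "continuous_on (space M) (\<gamma> t)" if "t \<in> {a..b}" for t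
    by (rule continuous_on_Times_slice_snd[OF gc that])
  have wt0: "continuous_on (space M) (w t0)" by (rule continuous_on_Times_slice_snd[OF wc t0])
  \<comment> \<open>the quotient, extended by \<open>0\<close> at \<open>h = 0\<close> so that dominated convergence applies\<close>
  define G where "G h x = (if h = 0 then 0 else (\<gamma> (t0 + h) x - \<gamma> t0 x) / h - w t0 x)" for h x
  define T where "T = {0..b - t0}"
  have hT: "t0 + h \<in> {a..b}" if "h \<in> T" for h using that t0 by (auto simp: T_def)
  have G_meas: "G h \<in> borel_measurable M" if "h \<in> T" for h
    unfolding G_def using \<gamma>t[OF hT[OF that]] \<gamma>t[OF t0] wt0
    by (cases "h = 0") (auto intro!: continuous_on_imp_borel_measurable continuous_intros)
  have G_bnd: "\<bar>G h x\<bar> \<le> 2 * B" if "h \<in> T" "x \<in> space M" for h x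
  proof -
    have "0 \<le> B" using B[OF t0 that(2)] by linarith
    then show ?thesis
      using difference_quotient_bounded[of a b "\<lambda>s. \<gamma> s x" "\<lambda>s. w s x" B t0 h] der B that hT t0
      by (cases "h = 0") (auto simp: G_def T_def)
  qed
  have G_cont: "continuous (at 0 within T) (\<lambda>h. G h x)" if x: "x \<in> space M" for x
    unfolding continuous_within_eps_delta
  proof (intro allI impI)
    fix \<epsilon> :: real assume "\<epsilon> > 0"
    then obtain d where d: "0 < d"
      "\<And>h. 0 < h \<Longrightarrow> h < d \<Longrightarrow> t0 + h \<in> {a..b} \<Longrightarrow> \<bar>(\<gamma> (t0 + h) x - \<gamma> t0 x) / h - w t0 x\<bar> \<le> \<epsilon> / 2"
      using difference_quotient_small[OF der[OF x t0], of "\<epsilon> / 2"] by auto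
    show "\<exists>d>0. \<forall>h\<in>T. dist h 0 < d \<longrightarrow> dist (G h x) (G 0 x) < \<epsilon>"
    proof (intro exI[of _ d] conjI ballI impI)
      fix h assume h: "h \<in> T" "dist h 0 < d"
      show "dist (G h x) (G 0 x) < \<epsilon>"
      proof (cases "h = 0")
        case False
        then have "0 < h" using h by (auto simp: T_def)
        then show ?thesis using d(2)[of h] h hT \<open>\<epsilon> > 0\<close> by (simp add: G_def dist_real_def)
      qed (simp add: G_def \<open>\<epsilon> > 0\<close>)
    qed (fact d(1))
  qed
  have "continuous (at 0 within T) (\<lambda>h. Lp_norm M p (G h))"
    by (rule continuous_within_Lp_norm[where B="2 * B"]) (use G_meas G_bnd G_cont t0 in \<open>auto simp: T_def\<close>)
  then obtain d where d: "0 < d"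
    "\<And>h. h \<in> T \<Longrightarrow> dist h 0 < d \<Longrightarrow> dist (Lp_norm M p (G h)) (Lp_norm M p (G 0)) < e"
    using e unfolding continuous_within_eps_delta by metis
  have "Lp_norm M p (G 0) = 0" using Lp_norm_zero by (simp add: G_def[abs_def])
  moreover have "Lp_norm M p (G h) = Lp_norm M p (\<lambda>x. (\<gamma> (t0 + h) x - \<gamma> t0 x) / h - w t0 x)"
    if "0 < h" for h
    using that by (simp add: G_def[abs_def])
  ultimately show ?thesis
  proof (intro that[OF d(1)])
    fix h assume "0 < h" "h < d" "t0 + h \<le> b"
    then show "Lp_norm M p (\<lambda>x. (\<gamma> (t0 + h) x - \<gamma> t0 x) / h - w t0 x) < e"
      using d(2)[of h] \<open>Lp_norm M p (G 0) = 0\<close> by (simp add: T_def dist_real_def G_def[abs_def])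
  qed
qed

lemma Lp_norm_increment_le:
  fixes \<gamma> w :: "real \<Rightarrow> 'a \<Rightarrow> real"
  assumes gc: "continuous_on ({a..b} \<times> space M) (\<lambda>z. \<gamma> (fst z) (snd z))"
    and wc: "continuous_on ({a..b} \<times> space M) (\<lambda>z. w (fst z) (snd z))"
    and der: "\<And>x t. x \<in> space M \<Longrightarrow> t \<in> {a..b} \<Longrightarrow>
               ((\<lambda>s. \<gamma> s x) has_vector_derivative w t x) (at t within {a..b})"
    and t0: "t0 \<in> {a..b}" and e: "0 < e"
  obtains d where "0 < d" "\<And>h. 0 < h \<Longrightarrow> h < d \<Longrightarrow> t0 + h \<le> b \<Longrightarrow>
      Lp_norm M p (\<lambda>x. \<gamma> (t0 + h) x - \<gamma> t0 x) \<le> h * (Lp_norm M p (w t0) + e)"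
proof -
  obtain d where d: "0 < d" "\<And>h. 0 < h \<Longrightarrow> h < d \<Longrightarrow> t0 + h \<le> b \<Longrightarrow>
      Lp_norm M p (\<lambda>x. (\<gamma> (t0 + h) x - \<gamma> t0 x) / h - w t0 x) < e"
    using Lp_norm_difference_quotient_small[OF gc wc der t0 e] by blast
  show ?thesis
  proof (rule that[OF d(1)])
    fix h assume h: "0 < h" "h < d" "t0 + h \<le> b"
    then have "t0 + h \<in> {a..b}" using t0 by simp
    then have bdd: "bdd_measurable (w t0)" "bdd_measurable (\<lambda>x. (\<gamma> (t0 + h) x - \<gamma> t0 x) / h - w t0 x)"
      using continuous_on_Times_slice_snd[OF gc] continuous_on_Times_slice_snd[OF wc t0] t0 h(1)
      by (auto intro!: continuous_on_imp_bdd_measurable continuous_intros)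
    have "Lp_norm M p (\<lambda>x. \<gamma> (t0 + h) x - \<gamma> t0 x)
        = Lp_norm M p (\<lambda>x. h * (w t0 x + ((\<gamma> (t0 + h) x - \<gamma> t0 x) / h - w t0 x)))"
      by (rule Lp_norm_cong) (use h in simp)
    also have "\<dots> = \<bar>h\<bar> * Lp_norm M p (\<lambda>x. w t0 x + ((\<gamma> (t0 + h) x - \<gamma> t0 x) / h - w t0 x))"
      by (rule Lp_norm_cmult)
    also have "\<dots> \<le> h * (Lp_norm M p (w t0) + e)"
      using Lp_norm_triangle[OF bdd] d(2)[OF h] h(1)
      by (simp only: abs_of_pos[OF h(1)], intro mult_left_mono) linarith+
    finally show "Lp_norm M p (\<lambda>x. \<gamma> (t0 + h) x - \<gamma> t0 x) \<le> h * (Lp_norm M p (w t0) + e)" .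
  qed
qed

lemma Lp_norm_diff_le_integral:
  fixes \<gamma> w :: "real \<Rightarrow> 'a \<Rightarrow> real"
  assumes ab: "a \<le> b"
    and gc: "continuous_on ({a..b} \<times> space M) (\<lambda>z. \<gamma> (fst z) (snd z))"
    and wc: "continuous_on ({a..b} \<times> space M) (\<lambda>z. w (fst z) (snd z))"
    and der: "\<And>x t. x \<in> space M \<Longrightarrow> t \<in> {a..b} \<Longrightarrow>
               ((\<lambda>s. \<gamma> s x) has_vector_derivative w t x) (at t within {a..b})"
  shows "continuous_on {a..b} (\<lambda>t. Lp_norm M p (w t))"
    and "Lp_norm M p (\<lambda>x. \<gamma> b x - \<gamma> a x) \<le> integral {a..b} (\<lambda>t. Lp_norm M p (w t))"
proof -
  show S_cont: "continuous_on {a..b} (\<lambda>t. Lp_norm M p (w t))"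
    by (rule continuous_on_Lp_norm[OF wc compact_Icc])
  have a_in: "a \<in> {a..b}" using ab by simp
  have \<gamma>t: "continuous_on (space M) (\<gamma> t)" if "t \<in> {a..b}" for t
    by (rule continuous_on_Times_slice_snd[OF gc that])
  have "continuous_on ({a..b} \<times> space M) (\<lambda>z. \<gamma> a (snd z))"
    by (rule continuous_on_compose2[OF \<gamma>t[OF a_in] continuous_on_snd]) auto
  then have "continuous_on ({a..b} \<times> space M) (\<lambda>z. \<gamma> (fst z) (snd z) - \<gamma> a (snd z))"
    using gc by (intro continuous_intros)
  then have L_cont: "continuous_on {a..b} (\<lambda>t. Lp_norm M p (\<lambda>x. \<gamma> t x - \<gamma> a x))"
    using continuous_on_Lp_norm[of "{a..b}" "\<lambda>t x. \<gamma> t x - \<gamma> a x"] by simp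
  have "Lp_norm M p (\<lambda>x. \<gamma> b x - \<gamma> a x) - Lp_norm M p (\<lambda>x. \<gamma> a x - \<gamma> a x)
      \<le> integral {a..b} (\<lambda>t. Lp_norm M p (w t))"
  proof (rule diff_le_integral_of_right_derivative_bound[OF ab L_cont S_cont])
    fix t0 e :: real assume t0: "t0 \<in> {a..<b}" and e: "0 < e"
    then have t0': "t0 \<in> {a..b}" by auto
    obtain d where d: "d > 0" "\<And>h. 0 < h \<Longrightarrow> h < d \<Longrightarrow> t0 + h \<le> b \<Longrightarrow>
        Lp_norm M p (\<lambda>x. \<gamma> (t0 + h) x - \<gamma> t0 x) \<le> h * (Lp_norm M p (w t0) + e)"
      using Lp_norm_increment_le[OF gc wc der t0' e] by blast
    have "Lp_norm M p (\<lambda>x. \<gamma> (t0 + h) x - \<gamma> a x)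
        \<le> Lp_norm M p (\<lambda>x. \<gamma> t0 x - \<gamma> a x) + h * (Lp_norm M p (w t0) + e)"
      if h: "0 < h" "h < d" "t0 + h \<le> b" for h
    proof -
      have "Lp_norm M p (\<lambda>x. \<gamma> (t0 + h) x - \<gamma> a x)
          \<le> Lp_norm M p (\<lambda>x. \<gamma> t0 x - \<gamma> a x) + Lp_norm M p (\<lambda>x. \<gamma> (t0 + h) x - \<gamma> t0 x)"
        using Lp_norm_triangle[of "\<lambda>x. \<gamma> t0 x - \<gamma> a x" "\<lambda>x. \<gamma> (t0 + h) x - \<gamma> t0 x"]
          \<gamma>t[OF t0'] \<gamma>t[OF a_in] \<gamma>t[of "t0 + h"] h t0
        by (auto intro!: continuous_on_imp_bdd_measurable continuous_intros)
      then show ?thesis using d(2)[OF h] by linarith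
    qed
    then show "\<exists>d>0. \<forall>h. 0 < h \<and> h < d \<and> t0 + h \<le> b \<longrightarrow>
        Lp_norm M p (\<lambda>x. \<gamma> (t0 + h) x - \<gamma> a x)
        \<le> Lp_norm M p (\<lambda>x. \<gamma> t0 x - \<gamma> a x) + h * (Lp_norm M p (w t0) + e)"
      using d(1) by blast
  qed
  then show "Lp_norm M p (\<lambda>x. \<gamma> b x - \<gamma> a x) \<le> integral {a..b} (\<lambda>t. Lp_norm M p (w t))"
    using Lp_norm_zero by simp
qed

end

section \<open>Compact manifolds given by an atlas\<close>

lemma continuous_on_openin_local:
  fixes f :: "'a::t2_space \<Rightarrow> 'b::topological_space"
  assumes "\<And>x. x \<in> S \<Longrightarrow> \<exists>N. openin (top_of_set S) N \<and> x \<in> N \<and> continuous_on N f"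
  shows "continuous_on S f"
proof (rule continuous_on_eq_continuous_within[THEN iffD2], rule ballI)
  fix x assume x: "x \<in> S"
  obtain N where N: "openin (top_of_set S) N" "x \<in> N" "continuous_on N f" using assms[OF x] by blast
  obtain V where V: "open V" "N = S \<inter> V" using N(1) by (auto simp: openin_open)
  have "at x within N = at x within S"
    using V N(2) by (intro at_within_nhd[of x V]) auto
  then show "continuous (at x within S) f"
    using N(2,3) by (metis continuous_on_eq_continuous_within)
qed

locale compact_manifold =
  fixes X :: "'a::t2_space set" and A :: "('a set \<times> ('a \<Rightarrow> 'n::euclidean_space)) set"
  assumes manifold: "compact_smooth_manifold X A"
begin

lemma compact_carrier: "compact X"
  using manifold by (simp add: compact_smooth_manifold_def)

lemma chartD:
  assumes "(U, \<phi>) \<in> A"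
  shows "openin (top_of_set X) U" "open (\<phi> ` U)" "inj_on \<phi> U" "continuous_on U \<phi>" "U \<subseteq> X"
proof -
  have "openin (top_of_set X) U \<and> open (\<phi> ` U) \<and> (\<exists>\<psi>. homeomorphism U (\<phi> ` U) \<phi> \<psi>)"
    using manifold assms unfolding compact_smooth_manifold_def smooth_atlas_def by fast
  then show "openin (top_of_set X) U" "open (\<phi> ` U)" "inj_on \<phi> U" "continuous_on U \<phi>" "U \<subseteq> X"
    unfolding homeomorphism_def by (auto intro: inj_on_inverseI dest: openin_imp_subset)
qed

lemma inv_chart_in_carrier: "(U, \<phi>) \<in> A \<Longrightarrow> y \<in> \<phi> ` U \<Longrightarrow> inv_into U \<phi> y \<in> X"
  using chartD(5) inv_into_into[of y \<phi> U] by auto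

lemma atlas_covers:
  assumes "x \<in> X"
  shows "\<exists>U \<phi>. (U, \<phi>) \<in> A \<and> x \<in> U"
proof -
  have "X = (\<Union>(U, \<phi>)\<in>A. U)"
    using manifold by (simp add: compact_smooth_manifold_def smooth_atlas_def)
  with assms show ?thesis by auto
qed

lemma Cinf_imp_Ck_on_chart:
  "f \<in> Cinf X A \<Longrightarrow> (U, \<phi>) \<in> A \<Longrightarrow> Ck_on k (\<phi> ` U) (\<lambda>y. f (inv_into U \<phi> y))"
  unfolding Cinf_def smooth_on_open_def by fast

lemma Cinf_imp_continuous_on:
  assumes f: "f \<in> Cinf X A"
  shows "continuous_on X f"
proof (rule continuous_on_openin_local)
  fix x assume "x \<in> X"
  then obtain U \<phi> where U: "(U, \<phi>) \<in> A" "x \<in> U" using atlas_covers by blast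
  have "continuous_on (\<phi> ` U) (\<lambda>y. f (inv_into U \<phi> y))"
    using Cinf_imp_Ck_on_chart[OF f U(1), of 0] by simp
  then have "continuous_on U (\<lambda>z. f (inv_into U \<phi> (\<phi> z)))"
    by (rule continuous_on_compose2[OF _ chartD(4)[OF U(1)]]) auto
  then have "continuous_on U f"
    by (rule continuous_on_eq) (simp add: inv_into_f_f chartD(3)[OF U(1)])
  then show "\<exists>N. openin (top_of_set X) N \<and> x \<in> N \<and> continuous_on N f"
    using chartD(1)[OF U(1)] U(2) by blast
qed

lemma smooth_curve_on_chart:
  fixes g :: "real \<times> 'n \<Rightarrow> real" and \<gamma> :: "real \<Rightarrow> 'a \<Rightarrow> real"
  assumes U: "(U, \<phi>) \<in> A" and T: "{a..b} \<subseteq> T"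
    and g: "smooth_on_open (T \<times> \<phi> ` U) g"
    and eq: "\<forall>t\<in>{a..b}. \<forall>y\<in>\<phi> ` U. g (t, y) = \<gamma> t (inv_into U \<phi> y)"
  shows "\<And>t x. t \<in> {a..b} \<Longrightarrow> x \<in> U \<Longrightarrow> \<gamma> t x = g (t, \<phi> x)"
    and "\<And>t x. t \<in> {a..b} \<Longrightarrow> x \<in> U \<Longrightarrow>
      ((\<lambda>s. \<gamma> s x) has_vector_derivative frechet_derivative g (at (t, \<phi> x)) (1, 0)) (at t within {a..b})"
    and "continuous_on ({a..b} \<times> U) (\<lambda>z. g (fst z, \<phi> (snd z)))"
    and "continuous_on ({a..b} \<times> U) (\<lambda>z. frechet_derivative g (at (fst z, \<phi> (snd z))) (1, 0))"
proof -
  have C1: "Ck_on (Suc 0) (T \<times> \<phi> ` U) g" using g by (simp add: smooth_on_open_def)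
  have diff: "g differentiable (at z)" if "z \<in> T \<times> \<phi> ` U" for z
    using C1 that unfolding Ck_on.simps by blast
  have c0: "continuous_on (T \<times> \<phi> ` U) g"
    using Ck_on_Suc_imp_Ck_on[OF C1] by simp
  have "(1::real, 0::'n) \<in> Basis" by (simp add: Basis_prod_def)
  then have c1: "continuous_on (T \<times> \<phi> ` U) (\<lambda>z. frechet_derivative g (at z) (1, 0))"
    using C1 unfolding Ck_on.simps by blast
  show eqx: "\<gamma> t x = g (t, \<phi> x)" if "t \<in> {a..b}" "x \<in> U" for t x
    using eq that inv_into_f_f[OF chartD(3)[OF U]] by auto
  show "((\<lambda>s. \<gamma> s x) has_vector_derivative frechet_derivative g (at (t, \<phi> x)) (1, 0)) (at t within {a..b})"
    if t: "t \<in> {a..b}" and x: "x \<in> U" for t x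
  proof -
    have z: "(t, \<phi> x) \<in> T \<times> \<phi> ` U" using t x T by auto
    define G' where "G' = frechet_derivative g (at (t, \<phi> x))"
    have dg: "(g has_derivative G') (at (t, \<phi> x))"
      unfolding G'_def using diff[OF z] frechet_derivative_works by blast
    have dp: "((\<lambda>s. (s, \<phi> x)) has_derivative (\<lambda>h. (h, 0))) (at t)"
      by (auto intro!: derivative_eq_intros)
    have "((\<lambda>s. g (s, \<phi> x)) has_derivative (\<lambda>h. G' (h, 0))) (at t)"
      using diff_chain_at[OF dp, of g G'] dg by (simp add: o_def)
    moreover have "(\<lambda>h. G' (h, 0)) = (\<lambda>h. h *\<^sub>R G' (1, 0))"
    proof
      fix h :: real
      have "(h, 0::'n) = h *\<^sub>R (1, 0)" by simp
      then show "G' (h, 0) = h *\<^sub>R G' (1, 0)" using has_derivative_linear[OF dg] by (metis linear_scale)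
    qed
    ultimately have "((\<lambda>s. g (s, \<phi> x)) has_vector_derivative G' (1, 0)) (at t)"
      by (simp add: has_vector_derivative_def)
    then have hv: "((\<lambda>s. g (s, \<phi> x)) has_vector_derivative G' (1, 0)) (at t within {a..b})"
      by (rule has_vector_derivative_at_within)
    show ?thesis unfolding G'_def
      by (rule has_vector_derivative_transform[OF t _ hv[unfolded G'_def]]) (use eqx x in auto)
  qed
  have cm: "continuous_on ({a..b} \<times> U) (\<lambda>z. (fst z, \<phi> (snd z)))"
    by (intro continuous_intros continuous_on_compose2[OF chartD(4)[OF U]]) auto
  have im: "(\<lambda>z. (fst z, \<phi> (snd z))) ` ({a..b} \<times> U) \<subseteq> T \<times> \<phi> ` U" using T by auto
  show "continuous_on ({a..b} \<times> U) (\<lambda>z. g (fst z, \<phi> (snd z)))"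
    by (rule continuous_on_compose2[OF c0 cm im])
  show "continuous_on ({a..b} \<times> U) (\<lambda>z. frechet_derivative g (at (fst z, \<phi> (snd z))) (1, 0))"
    by (rule continuous_on_compose2[OF c1 cm im])
qed

lemma smooth_curve_on_imp_C1:
  fixes \<gamma> :: "real \<Rightarrow> 'a \<Rightarrow> real"
  assumes ab: "a < b" and sc: "smooth_curve_on X A a b \<gamma>"
  defines "w t x \<equiv> vector_derivative (\<lambda>s. \<gamma> s x) (at t within {a..b})"
  shows "continuous_on ({a..b} \<times> X) (\<lambda>z. \<gamma> (fst z) (snd z))"
    and "continuous_on ({a..b} \<times> X) (\<lambda>z. w (fst z) (snd z))"
    and "\<And>x t. x \<in> X \<Longrightarrow> t \<in> {a..b} \<Longrightarrow> ((\<lambda>s. \<gamma> s x) has_vector_derivative w t x) (at t within {a..b})"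
proof -
  have chart: "\<exists>T g. {a..b} \<subseteq> T \<and> smooth_on_open (T \<times> \<phi> ` U) g \<and>
      (\<forall>t\<in>{a..b}. \<forall>y\<in>\<phi> ` U. g (t, y) = \<gamma> t (inv_into U \<phi> y))" if "(U, \<phi>) \<in> A" for U \<phi>
    using bspec[OF sc[unfolded smooth_curve_on_def] that] by auto
  have w_chart: "w t x = frechet_derivative g (at (t, \<phi> x)) (1, 0)"
    if "(U, \<phi>) \<in> A" "{a..b} \<subseteq> T" "smooth_on_open (T \<times> \<phi> ` U) g"
      "\<forall>t\<in>{a..b}. \<forall>y\<in>\<phi> ` U. g (t, y) = \<gamma> t (inv_into U \<phi> y)" "t \<in> {a..b}" "x \<in> U" for U \<phi> T g t x
    using vector_derivative_within_cbox[OF ab, of t "\<lambda>s. \<gamma> s x"] smooth_curve_on_chart(2)[OF that] that(5)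
    by (simp add: w_def)
  show "((\<lambda>s. \<gamma> s x) has_vector_derivative w t x) (at t within {a..b})"
    if x: "x \<in> X" and t: "t \<in> {a..b}" for x t
  proof -
    obtain U \<phi> where U: "(U, \<phi>) \<in> A" "x \<in> U" using atlas_covers[OF x] by auto
    then obtain T g where Tg: "{a..b} \<subseteq> T" "smooth_on_open (T \<times> \<phi> ` U) g"
      "\<forall>t\<in>{a..b}. \<forall>y\<in>\<phi> ` U. g (t, y) = \<gamma> t (inv_into U \<phi> y)"
      using chart[OF U(1)] by auto
    show ?thesis
      using smooth_curve_on_chart(2)[OF U(1) Tg t U(2)] w_chart[OF U(1) Tg t U(2)] by simp
  qed
  have local: "\<exists>N. openin (top_of_set ({a..b} \<times> X)) N \<and> z \<in> N \<and>
      continuous_on N (\<lambda>z. \<gamma> (fst z) (snd z)) \<and> continuous_on N (\<lambda>z. w (fst z) (snd z))"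
    if z: "z \<in> {a..b} \<times> X" for z
  proof -
    obtain U \<phi> where U: "(U, \<phi>) \<in> A" "snd z \<in> U" using atlas_covers[of "snd z"] z by auto
    then obtain T g where Tg: "{a..b} \<subseteq> T" "smooth_on_open (T \<times> \<phi> ` U) g"
      "\<forall>t\<in>{a..b}. \<forall>y\<in>\<phi> ` U. g (t, y) = \<gamma> t (inv_into U \<phi> y)"
      using chart[OF U(1)] by auto
    obtain V where V: "open V" "U = X \<inter> V" using chartD(1)[OF U(1)] by (auto simp: openin_open)
    have N: "({a..b} \<times> X) \<inter> (UNIV \<times> V) = {a..b} \<times> U" using V by auto
    have "openin (top_of_set ({a..b} \<times> X)) ({a..b} \<times> U)"
      unfolding N[symmetric] by (rule openin_open_Int) (simp add: open_Times V(1))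
    moreover have "continuous_on ({a..b} \<times> U) (\<lambda>z. \<gamma> (fst z) (snd z))"
      by (rule continuous_on_eq[OF smooth_curve_on_chart(3)[OF U(1) Tg]])
        (use smooth_curve_on_chart(1)[OF U(1) Tg] in auto)
    moreover have "continuous_on ({a..b} \<times> U) (\<lambda>z. w (fst z) (snd z))"
      by (rule continuous_on_eq[OF smooth_curve_on_chart(4)[OF U(1) Tg]])
        (use w_chart[OF U(1) Tg] in auto)
    ultimately show ?thesis using z U(2) by (intro exI[of _ "{a..b} \<times> U"]) (auto simp: mem_Times_iff)
  qed
  show "continuous_on ({a..b} \<times> X) (\<lambda>z. \<gamma> (fst z) (snd z))"
  proof (rule continuous_on_openin_local)
    fix z assume "z \<in> {a..b} \<times> X"
    from local[OF this] show "\<exists>N. openin (top_of_set ({a..b} \<times> X)) N \<and> z \<in> N \<and>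
        continuous_on N (\<lambda>z. \<gamma> (fst z) (snd z))" by blast
  qed
  show "continuous_on ({a..b} \<times> X) (\<lambda>z. w (fst z) (snd z))"
  proof (rule continuous_on_openin_local)
    fix z assume "z \<in> {a..b} \<times> X"
    from local[OF this] show "\<exists>N. openin (top_of_set ({a..b} \<times> X)) N \<and> z \<in> N \<and>
        continuous_on N (\<lambda>z. w (fst z) (snd z))" by blast
  qed
qed

end

section \<open>A short path on the sphere\<close>

lemma continuous_pos_bounds_on_compact:
  fixes F :: "'a::topological_space \<Rightarrow> real"
  assumes "compact S" "continuous_on S F" "\<And>x. x \<in> S \<Longrightarrow> 0 < F x"
  obtains m B where "0 < m" "m \<le> B" "\<And>x. x \<in> S \<Longrightarrow> m \<le> F x \<and> F x \<le> B"
proof (cases "S = {}")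
  case False
  obtain x0 where x0: "x0 \<in> S" "\<forall>y\<in>S. F x0 \<le> F y"
    using continuous_attains_inf[OF assms(1) False assms(2)] by blast
  obtain x1 where x1: "x1 \<in> S" "\<forall>y\<in>S. F y \<le> F x1"
    using continuous_attains_sup[OF assms(1) False assms(2)] by blast
  show ?thesis using that[of "F x0" "F x1"] x0 x1 assms(3)[OF x0(1)] by blast
qed (use that[of 1 1] in auto)

lemma convex_combination_powr_pos:
  fixes t u v s :: real
  assumes "0 \<le> t" "t \<le> 1" "0 < u" "0 < v"
  shows "(1 - t) * u powr s + t * v powr s > 0"
proof (cases "t = 0")
  case False
  then have "t * v powr s > 0" using assms by simp
  moreover have "(1 - t) * u powr s \<ge> 0" using assms by simp
  ultimately show ?thesis by linarith
qed (use assms in simp)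

locale sphere_setting = compact_manifold X A + compact_Lp_space M p
  for X :: "'a::t2_space set" and A :: "('a set \<times> ('a \<Rightarrow> 'n::euclidean_space)) set"
    and M :: "'a measure" and p :: real +
  fixes q r :: real
  assumes space_M: "space M = X" and q_ge_1: "1 \<le> q" and q_le_p: "q \<le> p"
begin

definition \<sigma> :: real where "\<sigma> = p / q"

lemma \<sigma>_ge_1: "1 \<le> \<sigma>"
  using q_ge_1 q_le_p by (simp add: \<sigma>_def)

lemma sphere_plusD:
  assumes "f \<in> sphere_plus X A M p q r"
  shows "f \<in> Cinf X A" "\<And>x. x \<in> X \<Longrightarrow> f x > 0" "mean (\<lambda>x. f x powr \<sigma>) = r powr \<sigma>"
    "continuous_on X f" "\<And>x. x \<notin> X \<Longrightarrow> f x = 0"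
  using assms Cinf_imp_continuous_on by (auto simp: sphere_plus_def mean_def \<sigma>_def Cinf_def)

lemma sphere_plus_powr_bounds:
  assumes "f \<in> sphere_plus X A M p q r"
  obtains m B where "0 < m" "m \<le> B" "\<And>x. x \<in> X \<Longrightarrow> m \<le> f x powr \<sigma> \<and> f x powr \<sigma> \<le> B"
proof -
  have "continuous_on X (\<lambda>x. f x powr \<sigma>)"
    using sphere_plusD(2,4)[OF assms] by (auto intro!: continuous_intros simp: less_imp_neq[symmetric])
  moreover have "0 < f x powr \<sigma>" if "x \<in> X" for x
    using sphere_plusD(2)[OF assms that] by simp
  ultimately show ?thesis
    using continuous_pos_bounds_on_compact[OF compact_carrier] that by blast
qed

text \<open>The path is the segment from \<open>f\<^sub>0\<^sup>\<sigma>\<close> to \<open>f\<^sub>1\<^sup>\<sigma>\<close> pulled back by \<open>g \<mapsto> g\<^bsup>1/\<sigma>\<^esup>\<close>; it stays on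
the sphere because the constraint is linear in \<open>f\<^sup>\<sigma>\<close>.\<close>

definition power_mean_path :: "('a \<Rightarrow> real) \<Rightarrow> ('a \<Rightarrow> real) \<Rightarrow> real \<Rightarrow> 'a \<Rightarrow> real" where
  "power_mean_path f0 f1 t x =
     (if x \<in> X then ((1 - t) * f0 x powr \<sigma> + t * f1 x powr \<sigma>) powr (1 / \<sigma>) else 0)"

definition power_mean_velocity :: "('a \<Rightarrow> real) \<Rightarrow> ('a \<Rightarrow> real) \<Rightarrow> real \<Rightarrow> 'a \<Rightarrow> real" where
  "power_mean_velocity f0 f1 t x =
     (1 / \<sigma>) * ((1 - t) * f0 x powr \<sigma> + t * f1 x powr \<sigma>) powr (1 / \<sigma> - 1) * (f1 x powr \<sigma> - f0 x powr \<sigma>)"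

context
  fixes f0 f1
  assumes f0: "f0 \<in> sphere_plus X A M p q r" and f1: "f1 \<in> sphere_plus X A M p q r"
begin

lemma power_mean_path_powr:
  "x \<in> X \<Longrightarrow> 0 \<le> t \<Longrightarrow> t \<le> 1 \<Longrightarrow>
     power_mean_path f0 f1 t x powr \<sigma> = (1 - t) * f0 x powr \<sigma> + t * f1 x powr \<sigma>"
  using convex_combination_powr_pos[of t "f0 x" "f1 x" \<sigma>] sphere_plusD(2)[OF f0] sphere_plusD(2)[OF f1] \<sigma>_ge_1
  by (simp add: power_mean_path_def powr_powr)

lemma power_mean_path_0: "power_mean_path f0 f1 0 = f0"
  and power_mean_path_1: "power_mean_path f0 f1 1 = f1"
  using sphere_plusD(2,5)[OF f0] sphere_plusD(2,5)[OF f1] \<sigma>_ge_1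
  by (auto simp: fun_eq_iff power_mean_path_def powr_powr less_imp_le)

lemma power_mean_path_in_sphere_plus:
  assumes t: "0 \<le> t" "t \<le> 1"
  shows "power_mean_path f0 f1 t \<in> sphere_plus X A M p q r"
proof -
  have "Ck_on k (\<phi> ` U) (\<lambda>y. power_mean_path f0 f1 t (inv_into U \<phi> y))" if U: "(U, \<phi>) \<in> A" for U \<phi> k
  proof (rule Ck_on_cong[OF chartD(2)[OF U]])
    show "Ck_on k (\<phi> ` U) (\<lambda>y. ((1 - t) * f0 (inv_into U \<phi> y) powr \<sigma> + t * f1 (inv_into U \<phi> y) powr \<sigma>) powr (1 / \<sigma>))"
      using sphere_plusD(2)[OF f0] sphere_plusD(2)[OF f1] inv_chart_in_carrier[OF U] t
      by (intro Ck_on_power_mean chartD(2)[OF U] Cinf_imp_Ck_on_chart[OF sphere_plusD(1)[OF f0] U]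
          Cinf_imp_Ck_on_chart[OF sphere_plusD(1)[OF f1] U] Ck_on_const convex_combination_powr_pos) auto
  qed (use inv_chart_in_carrier[OF U] in \<open>simp add: power_mean_path_def\<close>)
  then have "power_mean_path f0 f1 t \<in> Cinf X A"
    using chartD(2) by (auto simp: Cinf_def smooth_on_open_def power_mean_path_def)
  moreover have "power_mean_path f0 f1 t x > 0" if "x \<in> X" for x
    using convex_combination_powr_pos[OF t sphere_plusD(2)[OF f0 that] sphere_plusD(2)[OF f1 that], of \<sigma>] that
    by (simp add: power_mean_path_def)
  moreover have "mean (\<lambda>x. power_mean_path f0 f1 t x powr \<sigma>) = r powr \<sigma>"
  proof -
    have c: "continuous_on X (\<lambda>x. f0 x powr \<sigma>)" "continuous_on X (\<lambda>x. f1 x powr \<sigma>)"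
      using sphere_plusD(4,2)[OF f0] sphere_plusD(4,2)[OF f1]
      by (auto intro!: continuous_intros simp: less_imp_neq[symmetric])
    have "mean (\<lambda>x. power_mean_path f0 f1 t x powr \<sigma>) = mean (\<lambda>x. (1 - t) * f0 x powr \<sigma> + t * f1 x powr \<sigma>)"
      by (rule mean_cong) (use power_mean_path_powr t space_M in auto)
    also have "\<dots> = (1 - t) * mean (\<lambda>x. f0 x powr \<sigma>) + t * mean (\<lambda>x. f1 x powr \<sigma>)"
      using c space_M by (simp add: mean_add mean_cmult continuous_on_imp_integrable)
    finally show ?thesis using sphere_plusD(3)[OF f0] sphere_plusD(3)[OF f1] by (simp add: algebra_simps)
  qed
  ultimately show ?thesis by (simp add: sphere_plus_def mean_def \<sigma>_def)
qed

text \<open>On every chart the path extends smoothly to times slightly outside \<open>[0,1]\<close>, since the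
affine combination of \<open>f\<^sub>0\<^sup>\<sigma>\<close> and \<open>f\<^sub>1\<^sup>\<sigma>\<close> stays positive there.\<close>

lemma smooth_curve_on_power_mean_path: "smooth_curve_on X A 0 1 (power_mean_path f0 f1)"
  unfolding smooth_curve_on_def
proof (clarify)
  fix U \<phi> assume U: "(U, \<phi>) \<in> A"
  obtain m0 B0 where b0: "0 < m0" "m0 \<le> B0" "\<And>x. x \<in> X \<Longrightarrow> m0 \<le> f0 x powr \<sigma> \<and> f0 x powr \<sigma> \<le> B0"
    using sphere_plus_powr_bounds[OF f0] by blast
  obtain m1 B1 where b1: "0 < m1" "m1 \<le> B1" "\<And>x. x \<in> X \<Longrightarrow> m1 \<le> f1 x powr \<sigma> \<and> f1 x powr \<sigma> \<le> B1"
    using sphere_plus_powr_bounds[OF f1] by blast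
  define m B where "m = min m0 m1" and "B = max B0 B1"
  have mB: "0 < m" "\<And>x. x \<in> X \<Longrightarrow> m \<le> f0 x powr \<sigma> \<and> f0 x powr \<sigma> \<le> B \<and> m \<le> f1 x powr \<sigma> \<and> f1 x powr \<sigma> \<le> B"
    using b0(1) b1(1) b0(3) b1(3) unfolding m_def B_def by (simp, fastforce)
  define T where "T = {- (m / (2 * B)) <..< 1 + m / (2 * B)}"
  have "0 < m / (2 * B)" using b0 b1 mB by (simp add: m_def B_def)
  then have T: "open T" "{0..1} \<subseteq> T" by (auto simp: T_def)
  define a b where "a y = f0 (inv_into U \<phi> y)" and "b y = f1 (inv_into U \<phi> y)" for y
  define g where "g z = ((1 + (-1) * fst z) * a (snd z) powr \<sigma> + fst z * b (snd z) powr \<sigma>) powr (1 / \<sigma>)" for z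
  have open_dom: "open (T \<times> \<phi> ` U)" by (intro open_Times chartD(2)[OF U] T(1))
  have "Ck_on k (T \<times> \<phi> ` U) g" for k
    unfolding g_def
  proof (rule Ck_on_power_mean[OF open_dom])
    have sn: "snd ` (T \<times> \<phi> ` U) \<subseteq> \<phi> ` U" by auto
    show "Ck_on k (T \<times> \<phi> ` U) (\<lambda>z. a (snd z))"
      unfolding a_def
      by (rule Ck_on_compose_linear[OF linear_snd open_dom sn Cinf_imp_Ck_on_chart[OF sphere_plusD(1)[OF f0] U]])
    show "Ck_on k (T \<times> \<phi> ` U) (\<lambda>z. b (snd z))"
      unfolding b_def
      by (rule Ck_on_compose_linear[OF linear_snd open_dom sn Cinf_imp_Ck_on_chart[OF sphere_plusD(1)[OF f1] U]])
    show "Ck_on k (T \<times> \<phi> ` U) (\<lambda>z. 1 + - 1 * fst z)" "Ck_on k (T \<times> \<phi> ` U) fst"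
      by (intro Ck_on_add open_dom Ck_on_const Ck_on_cmult Ck_on_linear linear_fst)+
    fix z assume z: "z \<in> T \<times> \<phi> ` U"
    then have x: "inv_into U \<phi> (snd z) \<in> X" using inv_chart_in_carrier[OF U] by auto
    show "a (snd z) > 0" "b (snd z) > 0"
      using sphere_plusD(2)[OF f0 x] sphere_plusD(2)[OF f1 x] by (auto simp: a_def b_def)
    show "(1 + - 1 * fst z) * a (snd z) powr \<sigma> + fst z * b (snd z) powr \<sigma> > 0"
      using affine_combination_pos_near_unit_interval[OF mB(1), of "a (snd z) powr \<sigma>" B "b (snd z) powr \<sigma>" "fst z"]
        mB(2)[OF x] z by (auto simp: a_def b_def T_def)
  qed
  moreover have "g (t, y) = power_mean_path f0 f1 t (inv_into U \<phi> y)" if "y \<in> \<phi> ` U" for t y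
    using inv_chart_in_carrier[OF U that] by (simp add: g_def power_mean_path_def a_def b_def)
  ultimately show "\<exists>T g. open T \<and> {0..1} \<subseteq> T \<and> smooth_on_open (T \<times> \<phi> ` U) g \<and>
      (\<forall>t\<in>{0..1}. \<forall>y\<in>\<phi> ` U. g (t, y) = power_mean_path f0 f1 t (inv_into U \<phi> y))"
    using T open_dom by (intro exI[of _ T] exI[of _ g]) (simp add: smooth_on_open_def)
qed

lemma piecewise_smooth_power_mean_path: "piecewise_smooth_curve X A (power_mean_path f0 f1)"
  unfolding piecewise_smooth_curve_def
proof (intro exI[of _ "{0, 1}"] conjI ballI impI)
  fix a b :: real assume "a \<in> {0, 1}" "b \<in> {0, 1}" "a < b \<and> {a<..<b} \<inter> {0, 1} = {}"
  then show "smooth_curve_on X A a b (power_mean_path f0 f1)"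
    using smooth_curve_on_power_mean_path by auto
qed auto

lemma curve_velocity_power_mean_path:
  assumes x: "x \<in> X" and t: "0 \<le> t" "t \<le> 1"
  shows "curve_velocity (power_mean_path f0 f1) t x = power_mean_velocity f0 f1 t x"
proof -
  define u v where "u = f0 x powr \<sigma>" and "v = f1 x powr \<sigma>"
  have "(1 - t) * u + t * v > 0"
    unfolding u_def v_def by (rule convex_combination_powr_pos[OF t sphere_plusD(2)[OF f0 x] sphere_plusD(2)[OF f1 x]])
  then have "((\<lambda>s. ((1 - s) * u + s * v) powr (1 / \<sigma>)) has_real_derivative
      (1 / \<sigma>) * ((1 - t) * u + t * v) powr (1 / \<sigma> - 1) * (v - u)) (at t)"
    by (auto intro!: derivative_eq_intros simp: algebra_simps)
  moreover have "(\<lambda>s. power_mean_path f0 f1 s x) = (\<lambda>s. ((1 - s) * u + s * v) powr (1 / \<sigma>))"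
    using x by (simp add: power_mean_path_def u_def v_def fun_eq_iff)
  ultimately show ?thesis
    unfolding curve_velocity_def
    by (simp add: has_real_derivative_iff_has_vector_derivative vector_derivative_at
        power_mean_velocity_def u_def v_def)
qed

lemma continuous_on_power_mean_velocity:
  "continuous_on ({0..1} \<times> X) (\<lambda>z. power_mean_velocity f0 f1 (fst z) (snd z))"
proof -
  have "continuous_on ({0..1} \<times> X) (\<lambda>z. f (snd z))" if "continuous_on X f" for f :: "'a \<Rightarrow> real"
    by (rule continuous_on_compose2[OF that continuous_on_snd]) auto
  moreover have "0 < (1 - fst z) * f0 (snd z) powr \<sigma> + fst z * f1 (snd z) powr \<sigma>"
    "0 < f0 (snd z)" "0 < f1 (snd z)" if "z \<in> {0..1} \<times> X" for z
    using that sphere_plusD(2)[OF f0] sphere_plusD(2)[OF f1]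
    by (auto intro!: convex_combination_powr_pos)
  ultimately show ?thesis
    unfolding power_mean_velocity_def using sphere_plusD(4)[OF f0] sphere_plusD(4)[OF f1] \<sigma>_ge_1
    by (auto intro!: continuous_intros simp: less_imp_neq[symmetric])
qed

lemma Lp_norm_power_mean_velocity_le:
  assumes t: "t \<in> {0<..<1}"
  shows "Lp_norm M p (power_mean_velocity f0 f1 t)
    \<le> (t powr (1 / \<sigma> - 1) + (1 - t) powr (1 / \<sigma> - 1)) * Lp_norm M p (\<lambda>x. f1 x - f0 x)"
proof -
  define g where "g = t powr (1 / \<sigma> - 1) + (1 - t) powr (1 / \<sigma> - 1)"
  have "Lp_norm M p (power_mean_velocity f0 f1 t) \<le> Lp_norm M p (\<lambda>x. g * (f1 x - f0 x))"
  proof (rule Lp_norm_mono)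
    show "power_mean_velocity f0 f1 t \<in> borel_measurable M"
      using continuous_on_Times_slice_snd[OF continuous_on_power_mean_velocity] t space_M
      by (intro continuous_on_imp_borel_measurable) auto
    show "bdd_measurable (\<lambda>x. g * (f1 x - f0 x))"
      using sphere_plusD(4)[OF f0] sphere_plusD(4)[OF f1] space_M
      by (intro continuous_on_imp_bdd_measurable continuous_intros) auto
    fix x assume "x \<in> space M"
    then have x: "x \<in> X" using space_M by simp
    have "\<bar>power_mean_velocity f0 f1 t x\<bar> \<le> g * \<bar>f1 x - f0 x\<bar>"
      unfolding power_mean_velocity_def g_def using t
      by (intro power_mean_derivative_abs_le[OF \<sigma>_ge_1 _ _ sphere_plusD(2)[OF f0 x] sphere_plusD(2)[OF f1 x]]) auto
    then show "\<bar>power_mean_velocity f0 f1 t x\<bar> \<le> \<bar>g * (f1 x - f0 x)\<bar>"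
      by (simp add: abs_mult g_def)
  qed
  then show ?thesis by (simp add: Lp_norm_cmult g_def)
qed

lemma curve_length_power_mean_path:
  "curve_length M p (power_mean_path f0 f1) \<le> 2 * \<sigma> * Lp_norm M p (\<lambda>x. f1 x - f0 x)"
proof -
  define L where "L = Lp_norm M p (\<lambda>x. f1 x - f0 x)"
  define g where "g t = t powr (1 / \<sigma> - 1) + (1 - t) powr (1 / \<sigma> - 1)" for t
  have g_int: "((\<lambda>t. g t * L) has_integral (2 * \<sigma>) * L) {0<..<1}"
    using has_integral_mult_left[OF has_integral_powr_plus_reflected[OF \<sigma>_ge_1]]
      has_integral_open_interval[of "\<lambda>t. g t * L" "(2 * \<sigma>) * L" 0 "1::real"]
    by (simp add: g_def)
  have v_int: "(\<lambda>t. Lp_norm M p (power_mean_velocity f0 f1 t)) integrable_on {0<..<1}"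
    using continuous_on_Lp_norm[of "{0..1}"] continuous_on_power_mean_velocity space_M
      integrable_continuous_interval integrable_on_open_interval_real by fastforce
  have "curve_length M p (power_mean_path f0 f1)
      = integral {0<..<1} (\<lambda>t. Lp_norm M p (power_mean_velocity f0 f1 t))"
    unfolding curve_length_def integral_open_interval_real[symmetric]
    by (intro integral_cong Lp_norm_cong) (use curve_velocity_power_mean_path space_M in auto)
  also have "\<dots> \<le> integral {0<..<1} (\<lambda>t. g t * L)"
    using Lp_norm_power_mean_velocity_le g_int
    by (intro integral_le[OF v_int]) (auto simp: has_integral_integrable g_def L_def)
  also have "\<dots> = 2 * \<sigma> * L" by (rule integral_unique[OF g_int])
  finally show ?thesis by (simp add: L_def)
qed

end

end

section \<open>Lengths of curves on the sphere dominate the \<open>L\<^sup>p\<close> distance\<close>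

lemma integral_bound_on_partition:
  fixes S :: "real \<Rightarrow> real" and d :: "real \<Rightarrow> real \<Rightarrow> real"
  assumes D: "finite D" "a \<in> D" "D \<subseteq> {a..}"
    and piece: "\<And>s t. s \<in> D \<Longrightarrow> t \<in> D \<Longrightarrow> s < t \<Longrightarrow> {s<..<t} \<inter> D = {} \<Longrightarrow>
                  S integrable_on {s..t} \<and> d s t \<le> integral {s..t} S"
    and triangle: "\<And>s t. s \<in> D \<Longrightarrow> t \<in> D \<Longrightarrow> d a t \<le> d a s + d s t"
    and refl: "d a a \<le> 0"
    and c: "c \<in> D"
  shows "S integrable_on {a..c} \<and> d a c \<le> integral {a..c} S"
  using c
proof (induction "card {s \<in> D. s < c}" arbitrary: c rule: less_induct)
  case less
  show ?case
  proof (cases "c = a")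
    case True
    then show ?thesis using refl integrable_on_refl[of S a] by simp
  next
    case False
    define P where "P = {s \<in> D. s < c}"
    have P: "finite P" "a \<in> P" using D less.prems False by (auto simp: P_def)
    define c' where "c' = Max P"
    have c'P: "c' \<in> P" unfolding c'_def using P by (intro Max_in) auto
    then have c': "c' \<in> D" "c' < c" "a \<le> c'" using D by (auto simp: P_def)
    have gap: "{c'<..<c} \<inter> D = {}"
    proof (rule ccontr)
      assume "{c'<..<c} \<inter> D \<noteq> {}"
      then obtain s where "s \<in> D" "c' < s" "s < c" by auto
      then have "s \<in> P" "c' < s" by (simp_all add: P_def)
      then show False using Max_ge[OF P(1), of s] by (simp add: c'_def)
    qed
    have "{s \<in> D. s < c'} \<subset> P" using c'P c'(2) by (auto simp: P_def)
    then have "card {s \<in> D. s < c'} < card {s \<in> D. s < c}"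
      using psubset_card_mono[OF P(1)] by (simp add: P_def)
    note IH = less.hyps[OF this c'(1)]
    note pc = piece[OF c'(1) less.prems c'(2) gap]
    have int: "S integrable_on {a..c}"
      using Henstock_Kurzweil_Integration.integrable_combine[OF c'(3) less_imp_le[OF c'(2)] conjunct1[OF IH] conjunct1[OF pc]] .
    have "d a c \<le> d a c' + d c' c" by (rule triangle[OF c'(1) less.prems])
    also have "\<dots> \<le> integral {a..c'} S + integral {c'..c} S" using IH pc by simp
    also have "\<dots> = integral {a..c} S"
      by (rule Henstock_Kurzweil_Integration.integral_combine[OF c'(3) less_imp_le[OF c'(2)] int])
    finally show ?thesis using int by simp
  qed
qed

context sphere_setting
begin

lemma Lp_norm_diff_le_integral_velocity:
  fixes \<gamma> :: "real \<Rightarrow> 'a \<Rightarrow> real"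
  assumes ab: "a < b" and sc: "smooth_curve_on X A a b \<gamma>"
  shows "(\<lambda>t. Lp_norm M p (curve_velocity \<gamma> t)) integrable_on {a..b}"
    and "Lp_norm M p (\<lambda>x. \<gamma> b x - \<gamma> a x) \<le> integral {a..b} (\<lambda>t. Lp_norm M p (curve_velocity \<gamma> t))"
proof -
  define w where "w t x = vector_derivative (\<lambda>s. \<gamma> s x) (at t within {a..b})" for t x
  note C1 = smooth_curve_on_imp_C1[OF ab sc, folded w_def space_M]
  note bound = Lp_norm_diff_le_integral[OF less_imp_le[OF ab] C1]
  have "Lp_norm M p (curve_velocity \<gamma> t) = Lp_norm M p (w t)" if t: "t \<in> {a<..<b}" for t
  proof (rule Lp_norm_cong)
    fix x assume x: "x \<in> space M"
    have "((\<lambda>s. \<gamma> s x) has_vector_derivative w t x) (at t within {a<..<b})"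
      using t by (intro has_vector_derivative_within_subset[OF C1(3)[OF x]]) auto
    then have "((\<lambda>s. \<gamma> s x) has_vector_derivative w t x) (at t)"
      using has_vector_derivative_within_open[OF t open_greaterThanLessThan] by blast
    then show "curve_velocity \<gamma> t x = w t x"
      unfolding curve_velocity_def by (rule vector_derivative_at)
  qed
  then have eq: "integral {a<..<b} (\<lambda>t. Lp_norm M p (curve_velocity \<gamma> t)) = integral {a<..<b} (\<lambda>t. Lp_norm M p (w t))"
    and int: "(\<lambda>t. Lp_norm M p (curve_velocity \<gamma> t)) integrable_on {a<..<b}"
    using integrable_continuous_interval[OF bound(1)] integrable_on_open_interval_real
      integrable_cong[of "{a<..<b}" "\<lambda>t. Lp_norm M p (curve_velocity \<gamma> t)" "\<lambda>t. Lp_norm M p (w t)"]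
    by (auto intro: integral_cong)
  show "(\<lambda>t. Lp_norm M p (curve_velocity \<gamma> t)) integrable_on {a..b}"
    using int integrable_on_open_interval_real by blast
  show "Lp_norm M p (\<lambda>x. \<gamma> b x - \<gamma> a x) \<le> integral {a..b} (\<lambda>t. Lp_norm M p (curve_velocity \<gamma> t))"
    using bound(2) eq by (simp add: integral_open_interval_real[symmetric])
qed

lemma Lp_norm_diff_le_curve_length:
  fixes \<gamma> :: "real \<Rightarrow> 'a \<Rightarrow> real"
  assumes pw: "piecewise_smooth_curve X A \<gamma>" and sp: "\<forall>t\<in>{0..1}. \<gamma> t \<in> sphere_plus X A M p q r"
  shows "Lp_norm M p (\<lambda>x. \<gamma> 1 x - \<gamma> 0 x) \<le> curve_length M p \<gamma>"
proof -
  obtain D where D0: "finite D \<and> {0, 1} \<subseteq> D \<and> D \<subseteq> {0..1} \<and>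
      (\<forall>a\<in>D. \<forall>b\<in>D. a < b \<and> {a<..<b} \<inter> D = {} \<longrightarrow> smooth_curve_on X A a b \<gamma>)"
    using pw unfolding piecewise_smooth_curve_def by (elim exE) (rule that)
  then have D: "finite D" "{0, 1} \<subseteq> D" "D \<subseteq> {0..1}"
    "\<And>a b. a \<in> D \<Longrightarrow> b \<in> D \<Longrightarrow> a < b \<Longrightarrow> {a<..<b} \<inter> D = {} \<Longrightarrow> smooth_curve_on X A a b \<gamma>"
    by simp_all
  have bdd: "bdd_measurable (\<gamma> t)" if "t \<in> D" for t
  proof -
    have "\<gamma> t \<in> sphere_plus X A M p q r" using sp D(3) that by blast
    then have "continuous_on (space M) (\<gamma> t)" using sphere_plusD(4) space_M by simp
    then show ?thesis by (rule continuous_on_imp_bdd_measurable)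
  qed
  have "(\<lambda>t. Lp_norm M p (curve_velocity \<gamma> t)) integrable_on {0..1} \<and>
      Lp_norm M p (\<lambda>x. \<gamma> 1 x - \<gamma> 0 x) \<le> integral {0..1} (\<lambda>t. Lp_norm M p (curve_velocity \<gamma> t))"
  proof (rule integral_bound_on_partition[where d="\<lambda>s t. Lp_norm M p (\<lambda>x. \<gamma> t x - \<gamma> s x)"])
    show "finite D" "0 \<in> D" "D \<subseteq> {0..}" "1 \<in> D" using D by auto
    show "Lp_norm M p (\<lambda>x. \<gamma> 0 x - \<gamma> 0 x) \<le> 0" using Lp_norm_zero by simp
    fix s t assume st: "s \<in> D" "t \<in> D"
    have "0 \<in> D" using D(2) by simp
    have "Lp_norm M p (\<lambda>x. \<gamma> t x - \<gamma> 0 x)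
        = Lp_norm M p (\<lambda>x. (\<gamma> s x - \<gamma> 0 x) + (\<gamma> t x - \<gamma> s x))"
      by (rule Lp_norm_cong) simp
    also have "\<dots> \<le> Lp_norm M p (\<lambda>x. \<gamma> s x - \<gamma> 0 x) + Lp_norm M p (\<lambda>x. \<gamma> t x - \<gamma> s x)"
      by (intro Lp_norm_triangle bdd_measurable_diff bdd st \<open>0 \<in> D\<close>)
    finally show "Lp_norm M p (\<lambda>x. \<gamma> t x - \<gamma> 0 x)
        \<le> Lp_norm M p (\<lambda>x. \<gamma> s x - \<gamma> 0 x) + Lp_norm M p (\<lambda>x. \<gamma> t x - \<gamma> s x)" .
    assume "s < t" "{s<..<t} \<inter> D = {}"
    note piece = Lp_norm_diff_le_integral_velocity[OF \<open>s < t\<close> D(4)[OF st this]]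
    show "(\<lambda>t. Lp_norm M p (curve_velocity \<gamma> t)) integrable_on {s..t} \<and>
        Lp_norm M p (\<lambda>x. \<gamma> t x - \<gamma> s x) \<le> integral {s..t} (\<lambda>t. Lp_norm M p (curve_velocity \<gamma> t))"
      using piece by (rule conjI)
  qed
  then show ?thesis by (simp add: curve_length_def)
qed

definition admissible_lengths :: "('a \<Rightarrow> real) \<Rightarrow> ('a \<Rightarrow> real) \<Rightarrow> real set" where
  "admissible_lengths f0 f1 = {curve_length M p \<gamma> | \<gamma>. piecewise_smooth_curve X A \<gamma> \<and>
      (\<forall>t\<in>{0..1}. \<gamma> t \<in> sphere_plus X A M p q r) \<and> \<gamma> 0 = f0 \<and> \<gamma> 1 = f1}"

lemma dist_sphere_eq_Inf: "dist_sphere X A M p q r f0 f1 = Inf (admissible_lengths f0 f1)"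
  by (simp add: dist_sphere_def admissible_lengths_def)

lemma Lp_norm_le_admissible_length:
  assumes "l \<in> admissible_lengths f0 f1"
  shows "Lp_norm M p (\<lambda>x. f0 x - f1 x) \<le> l"
proof -
  obtain \<gamma> where \<gamma>: "l = curve_length M p \<gamma>" "piecewise_smooth_curve X A \<gamma>"
    "\<forall>t\<in>{0..1}. \<gamma> t \<in> sphere_plus X A M p q r" "\<gamma> 0 = f0" "\<gamma> 1 = f1"
    using assms unfolding admissible_lengths_def by blast
  have "Lp_norm M p (\<lambda>x. \<gamma> 1 x - \<gamma> 0 x) \<le> curve_length M p \<gamma>"
    by (rule Lp_norm_diff_le_curve_length[OF \<gamma>(2,3)])
  then show ?thesis
    using \<gamma>(1,4,5) Lp_norm_minus_commute[of f0 f1] by simp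
qed

lemma curve_length_power_mean_path_admissible:
  assumes "f0 \<in> sphere_plus X A M p q r" "f1 \<in> sphere_plus X A M p q r"
  shows "curve_length M p (power_mean_path f0 f1) \<in> admissible_lengths f0 f1"
  unfolding admissible_lengths_def
  using piecewise_smooth_power_mean_path[OF assms] power_mean_path_in_sphere_plus[OF assms]
    power_mean_path_0[OF assms] power_mean_path_1[OF assms]
  by auto

lemma Lp_norm_le_dist_sphere:
  assumes "f0 \<in> sphere_plus X A M p q r" "f1 \<in> sphere_plus X A M p q r"
  shows "Lp_norm M p (\<lambda>x. f0 x - f1 x) \<le> dist_sphere X A M p q r f0 f1"
  unfolding dist_sphere_eq_Inf
  using curve_length_power_mean_path_admissible[OF assms] Lp_norm_le_admissible_length
  by (intro cInf_greatest) auto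

lemma dist_sphere_nonneg:
  "f0 \<in> sphere_plus X A M p q r \<Longrightarrow> f1 \<in> sphere_plus X A M p q r \<Longrightarrow> 0 \<le> dist_sphere X A M p q r f0 f1"
  using Lp_norm_le_dist_sphere Lp_norm_nonneg order_trans by blast

lemma dist_sphere_le_Lp_norm:
  assumes "f0 \<in> sphere_plus X A M p q r" "f1 \<in> sphere_plus X A M p q r"
  shows "dist_sphere X A M p q r f0 f1 \<le> 2 * \<sigma> * Lp_norm M p (\<lambda>x. f0 x - f1 x)"
proof -
  have "bdd_below (admissible_lengths f0 f1)"
    using Lp_norm_le_admissible_length by (rule bdd_belowI)
  then have "dist_sphere X A M p q r f0 f1 \<le> curve_length M p (power_mean_path f0 f1)"
    unfolding dist_sphere_eq_Inf by (rule cInf_lower[OF curve_length_power_mean_path_admissible[OF assms]])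
  also have "\<dots> \<le> 2 * \<sigma> * Lp_norm M p (\<lambda>x. f1 x - f0 x)"
    by (rule curve_length_power_mean_path[OF assms])
  also have "\<dots> = 2 * \<sigma> * Lp_norm M p (\<lambda>x. f0 x - f1 x)"
    by (simp only: Lp_norm_minus_commute[of f1 f0])
  finally show ?thesis .
qed

end

theorem proposition2p1:
  fixes X :: "'a::t2_space set"
    and A :: "('a set \<times> ('a \<Rightarrow> 'n::euclidean_space)) set"
    and M :: "'a measure"
    and p q r :: real
    and f :: "'a \<Rightarrow> real"
  assumes "1 \<le> q" and "q \<le> p"
    and "compact_smooth_manifold X A"
    and "sets M = sets (restrict_space borel X)"
    and "emeasure M X < \<infinity>" and "emeasure M X > 0"
    and "r > 0"
    and "f \<in> sphere_plus X A M p q r"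
  shows "\<exists>C>0. \<forall>f0\<in>sphere_plus X A M p q r. \<forall>f1\<in>sphere_plus X A M p q r.
           C / (dist_sphere X A M p q r f f0 + dist_sphere X A M p q r f f1 + 1)
             * dist_sphere X A M p q r f0 f1
           \<le> Lp_norm M p (\<lambda>x. f0 x - f1 x)
         \<and> Lp_norm M p (\<lambda>x. f0 x - f1 x) \<le> dist_sphere X A M p q r f0 f1"
proof -
  have space: "space M = X"
    using sets_eq_imp_space_eq[OF assms(4)] by (simp add: space_restrict_space)
  interpret finite_measure M
    by (rule finite_measureI) (use assms(5) space in auto)
  interpret sphere_setting X A M p q r
    using assms space by unfold_locales (auto simp: compact_smooth_manifold_def emeasure_eq_measure)
  have "0 < \<sigma>" using \<sigma>_ge_1 by simp
  show ?thesis
  proof (intro exI[of _ "1 / (2 * \<sigma>)"] conjI ballI)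
    fix f0 f1 assume f0: "f0 \<in> sphere_plus X A M p q r" and f1: "f1 \<in> sphere_plus X A M p q r"
    define D where "D = dist_sphere X A M p q r f f0 + dist_sphere X A M p q r f f1"
    have "1 / (2 * \<sigma>) / (D + 1) \<le> 1 / (2 * \<sigma>)"
      using dist_sphere_nonneg[OF assms(8) f0] dist_sphere_nonneg[OF assms(8) f1] \<open>0 < \<sigma>\<close>
      by (simp add: D_def divide_le_eq)
    then have "1 / (2 * \<sigma>) / (D + 1) * dist_sphere X A M p q r f0 f1
        \<le> 1 / (2 * \<sigma>) * dist_sphere X A M p q r f0 f1"
      using dist_sphere_nonneg[OF f0 f1] by (rule mult_right_mono)
    also have "\<dots> \<le> Lp_norm M p (\<lambda>x. f0 x - f1 x)"
      using dist_sphere_le_Lp_norm[OF f0 f1] \<open>0 < \<sigma>\<close> by (simp add: field_simps)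
    finally show "1 / (2 * \<sigma>) / (dist_sphere X A M p q r f f0 + dist_sphere X A M p q r f f1 + 1)
        * dist_sphere X A M p q r f0 f1 \<le> Lp_norm M p (\<lambda>x. f0 x - f1 x)" by (simp add: D_def)
    show "Lp_norm M p (\<lambda>x. f0 x - f1 x) \<le> dist_sphere X A M p q r f0 f1"
      by (rule Lp_norm_le_dist_sphere[OF f0 f1])
  qed (use \<open>0 < \<sigma>\<close> in simp)
qed
end
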